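(* The inner structural $\lambda$-calculus $\lambda j_{\tt in}$ enjoys PSN: every $\lambda$-term that is $\beta$-strongly normalizing is strongly normalizing for $\to_{\lambda j_{\tt in}}$.
   Context: $\lambda j$-terms are generated by $t,u::= x\mid \lambda x.t\mid t\,u\mid t[x/u]$; $\lambda x.t$ and $t[x/u]$ bind $x$ in $t$ (not in $u$), and terms are considered modulo $\alpha$-conversion. $\lambda$-terms are those without jumps. $\mathrm{fv}(t)$ is the set of free variables, $t\{x/u\}$ is capture-avoiding meta-level substitution, and $|t|_x$ is the number of free occurrences of $x$ in $t$. If $|t|_x=n\ge2$, $t_{[y]_x}$ denotes any term obtained from $t$ by replacing $k$ of the free occurrences of $x$ by a fresh variable $y$, for some $1\le k\le n-1$. ${\tt L}$ denotes a (possibly empty) list of jumps $[x_1/u_1]\dots[x_k/u_k]$. The calculus $\lambda j_{\tt in}$ has the following rules closed under all contexts: $({\tt dB})$ $(\lambda x.t){\tt L}\,u\to t[x/u]{\tt L}$ where no $x_i$ of ${\tt L}$ is free in $u$; $({\tt w})$ $t[x/u]\to t$ if $|t|_x=0$; $({\tt d})$ $t[x/u]\to t\{x/u\}$ if $|t|_x=1$; $({\tt c})$ $t[x/u]\to t_{[y]_x}[x/u][y/u]$ if $|t|_x\ge2$, $y$ fresh; $({\tt in}_1)$ $(\lambda y.t)[x/u]\to\lambda y.(t[x/u])$ (with $y\notin\mathrm{fv}(u)$ by $\alpha$); $({\tt in}_2)$ $(t\,v)[x/u]\to t[x/u]\,v$ if $x\notin\mathrm{fv}(v)$; $({\tt in}_3)$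 $(t\,v)[x/u]\to t\,(v[x/u])$ if $x\notin\mathrm{fv}(t)$ and $x\in\mathrm{fv}(v)$; $({\tt in}_4)$ $t[y/v][x/u]\to t[y/v[x/u]]$ if $x\notin\mathrm{fv}(t)$ and $x\in\mathrm{fv}(v)$; all taken modulo $\equiv_{\tt CS}$, the smallest equivalence closed under contexts containing $t[x/s][y/v]\sim t[y/v][x/s]$ if $x\notin\mathrm{fv}(v)$ and $y\notin\mathrm{fv}(s)$ (i.e. $t\to_{\lambda j_{\tt in}}u$ iff $t\equiv_{\tt CS}t'\to u'\equiv_{\tt CS}u$ for one of these rules). $\beta$-reduction is the contextual closure of $(\lambda x.t)u\to t\{x/u\}$. *)

theory Defs
  imports Main
begin

text \<open>lambda-j terms modulo alpha-conversion, represented with de Bruijn indices.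
  Sub t u stands for the jump t[x/u]; it binds index 0 in t (not in u).\<close>

datatype trm = Var nat | Lam trm | App trm trm | Sub trm trm

fun lift :: "nat \<Rightarrow> trm \<Rightarrow> trm" where
  "lift k (Var i) = (if i < k then Var i else Var (Suc i))"
| "lift k (Lam t) = Lam (lift (Suc k) t)"
| "lift k (App t u) = App (lift k t) (lift k u)"
| "lift k (Sub t u) = Sub (lift (Suc k) t) (lift k u)"

fun subst :: "trm \<Rightarrow> nat \<Rightarrow> trm \<Rightarrow> trm" where
  "subst (Var i) k s = (if i < k then Var i else if i = k then s else Var (i - 1))"
| "subst (Lam t) k s = Lam (subst t (Suc k) (lift 0 s))"
| "subst (App t u) k s = App (subst t k s) (subst u k s)"
| "subst (Sub t u) k s = Sub (subst t (Suc k) (lift 0 s)) (subst u k s)"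

fun cnt :: "nat \<Rightarrow> trm \<Rightarrow> nat" where
  "cnt k (Var i) = (if i = k then 1 else 0)"
| "cnt k (Lam t) = cnt (Suc k) t"
| "cnt k (App t u) = cnt k t + cnt k u"
| "cnt k (Sub t u) = cnt (Suc k) t + cnt k u"

fun swap :: "nat \<Rightarrow> trm \<Rightarrow> trm" where
  "swap k (Var i) = (if i = k then Var (Suc k) else if i = Suc k then Var k else Var i)"
| "swap k (Lam t) = Lam (swap (Suc k) t)"
| "swap k (App t u) = App (swap k t) (swap k u)"
| "swap k (Sub t u) = Sub (swap (Suc k) t) (swap k u)"

text \<open>renames i t s: s is t where a fresh variable y has been inserted at index i+1
  (free indices above i shifted up) and each free occurrence of index i (the variable x)
  has either been kept or replaced by y.\<close>
inductive renames :: "nat \<Rightarrow> trm \<Rightarrow> trm \<Rightarrow> bool" where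
  "j < i \<Longrightarrow> renames i (Var j) (Var j)"
| "renames i (Var i) (Var i)"
| "renames i (Var i) (Var (Suc i))"
| "i < j \<Longrightarrow> renames i (Var j) (Var (Suc j))"
| "renames (Suc i) t s \<Longrightarrow> renames i (Lam t) (Lam s)"
| "renames i t s \<Longrightarrow> renames i u v \<Longrightarrow> renames i (App t u) (App s v)"
| "renames (Suc i) t s \<Longrightarrow> renames i u v \<Longrightarrow> renames i (Sub t u) (Sub s v)"

text \<open>t L, where L = [x1/u1]...[xk/uk] is given as the list [u1,...,uk].\<close>
fun jumps :: "trm \<Rightarrow> trm list \<Rightarrow> trm" where
  "jumps t [] = t"
| "jumps t (v # vs) = jumps (Sub t v) vs"

inductive root_jin :: "trm \<Rightarrow> trm \<Rightarrow> bool" where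
  dB: "root_jin (App (jumps (Lam t) L) u) (jumps (Sub t ((lift 0 ^^ length L) u)) L)"
| w: "root_jin (Sub (lift 0 t) u) t"
| d: "cnt 0 t = 1 \<Longrightarrow> root_jin (Sub t u) (subst t 0 u)"
| c: "cnt 0 t \<ge> 2 \<Longrightarrow> renames 0 t s \<Longrightarrow> cnt 0 s \<ge> 1 \<Longrightarrow> cnt 1 s \<ge> 1 \<Longrightarrow>
      root_jin (Sub t u) (Sub (Sub s (lift 0 u)) u)"
| in1: "root_jin (Sub (Lam t) u) (Lam (Sub (swap 0 t) (lift 0 u)))"
| in2: "root_jin (Sub (App t (lift 0 v)) u) (App (Sub t u) v)"
| in3: "cnt 0 v \<ge> 1 \<Longrightarrow> root_jin (Sub (App (lift 0 t) v) u) (App t (Sub v u))"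
| in4: "cnt 0 v \<ge> 1 \<Longrightarrow> root_jin (Sub (Sub (lift 1 t) v) u) (Sub t (Sub v u))"

inductive ctx :: "(trm \<Rightarrow> trm \<Rightarrow> bool) \<Rightarrow> trm \<Rightarrow> trm \<Rightarrow> bool" for R where
  root: "R t u \<Longrightarrow> ctx R t u"
| lam: "ctx R t u \<Longrightarrow> ctx R (Lam t) (Lam u)"
| appl: "ctx R t u \<Longrightarrow> ctx R (App t v) (App u v)"
| appr: "ctx R t u \<Longrightarrow> ctx R (App v t) (App v u)"
| subl: "ctx R t u \<Longrightarrow> ctx R (Sub t v) (Sub u v)"
| subr: "ctx R t u \<Longrightarrow> ctx R (Sub v t) (Sub v u)"

text \<open>t[x/s][y/v] ~ t[y/v][x/s] if y not free in s (x not free in v is ensured by alpha).\<close>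
inductive cs_root :: "trm \<Rightarrow> trm \<Rightarrow> bool" where
  "cs_root (Sub (Sub t (lift 0 s)) v) (Sub (Sub (swap 0 t) (lift 0 v)) s)"

definition cs_eq :: "trm \<Rightarrow> trm \<Rightarrow> bool" where
  "cs_eq = equivclp (ctx cs_root)"

definition jin :: "trm \<Rightarrow> trm \<Rightarrow> bool" where
  "jin t u \<longleftrightarrow> (\<exists>t' u'. cs_eq t t' \<and> ctx root_jin t' u' \<and> cs_eq u' u)"

inductive beta :: "trm \<Rightarrow> trm \<Rightarrow> bool" where
  root: "beta (App (Lam t) u) (subst t 0 u)"
| lam: "beta t u \<Longrightarrow> beta (Lam t) (Lam u)"
| appl: "beta t u \<Longrightarrow> beta (App t v) (App u v)"
| appr: "beta t u \<Longrightarrow> beta (App v t) (App v u)"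

fun is_lambda :: "trm \<Rightarrow> bool" where
  "is_lambda (Var i) = True"
| "is_lambda (Lam t) = is_lambda t"
| "is_lambda (App t u) = (is_lambda t \<and> is_lambda u)"
| "is_lambda (Sub t u) = False"

definition SN :: "('a \<Rightarrow> 'a \<Rightarrow> bool) \<Rightarrow> 'a \<Rightarrow> bool" where
  "SN R t \<longleftrightarrow> Wellfounded.accp (\<lambda>a b. R b a) t"

end

theory Submission
  imports Defs "HOL-Library.Multiset_Order" "HOL-Library.Product_Lexorder"
begin

(* We use a non-idempotent intersection type system (types with multisets of argument
   types) whose derivations carry a measure: a size n and two multisets C, H that
   account for the jumps of the term.  The proof has two halves.

   (1) Typable terms are lambda-j-in strongly normalising.  Derivations are invariant
       under the equivalence CS, and every root rule (dB, w, d, c, in1..in4), closed under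
       contexts, maps a derivation to one of the reduct with a strictly smaller measure
       (lexicographically: size first, then a multiset of pairs built from C and H).
       Since this order is well founded, jin-reduction from a typable term terminates.

   (2) Every beta-strongly normalising lambda-term is typable.  This is shown by
       well-founded induction along beta-steps and proper subterms: neutral terms can
       be typed with any type, and a head redex (\<lambda>s) c ds is typable whenever its
       contractum s{c} ds and its argument c are (subject expansion, via the
       "anti-substitution" lemma). *)

section \<open>Types, environments and measures\<close>

datatype ty = Atom | Arr "ty multiset" ty

type_synonym env = "nat \<Rightarrow> ty multiset"

definition eadd :: "env \<Rightarrow> env \<Rightarrow> env" (infixl "\<oplus>" 65) where
  "\<Gamma> \<oplus> \<Delta> = (\<lambda>i. \<Gamma> i + \<Delta> i)"

definition single :: "nat \<Rightarrow> ty \<Rightarrow> env" where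
  "single k \<sigma> = (\<lambda>i. if i = k then {#\<sigma>#} else {#})"

(* The environment operations mirroring the index manipulations on terms: removing
   index k (binding), inserting an empty index k (lifting), exchanging k and k+1 (swap),
   and splitting index i into the two indices i, i+1 (renaming for rule c). *)
definition rem :: "nat \<Rightarrow> env \<Rightarrow> env" where
  "rem k \<Gamma> = (\<lambda>i. if i < k then \<Gamma> i else \<Gamma> (Suc i))"
definition ins :: "nat \<Rightarrow> env \<Rightarrow> env" where
  "ins k \<Gamma> = (\<lambda>i. if i < k then \<Gamma> i else if i = k then {#} else \<Gamma> (i - 1))"
definition sw :: "nat \<Rightarrow> env \<Rightarrow> env" where
  "sw k \<Gamma> = (\<lambda>i. if i = k then \<Gamma> (Suc k) else if i = Suc k then \<Gamma> k else \<Gamma> i)"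
definition splitenv :: "nat \<Rightarrow> ty multiset \<Rightarrow> ty multiset \<Rightarrow> env \<Rightarrow> env" where
  "splitenv i A B \<Gamma> = (\<lambda>j. if j < i then \<Gamma> j else if j = i then A else if j = Suc i then B else \<Gamma> (j - 1))"

definition env_sub :: "env \<Rightarrow> env \<Rightarrow> bool" where
  "env_sub \<Gamma> \<Delta> \<longleftrightarrow> (\<forall>i. \<Gamma> i \<subseteq># \<Delta> i)"

(* The open jump weights H of a derivation become closed pairs (b, k) once the
   derivation is placed under a constructor whose subderivation has size b. *)
definition close :: "nat \<Rightarrow> nat multiset \<Rightarrow> (nat \<times> nat) multiset" where
  "close b H = image_mset (Pair b) H"

(* A judgement record: environment, type, size, closed measure C and open weights O
   of one derivation.  Arguments of applications and jumps are typed by multisets of them. *)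
datatype judg = Judg (tenv: env) (tty: ty) (tsz: nat) (tC: "(nat \<times> nat) multiset") (tO: "nat multiset")

definition judgs_env :: "judg multiset \<Rightarrow> env" where
  "judgs_env T = (\<lambda>i. \<Sum>\<^sub># (image_mset (\<lambda>j. tenv j i) T))"
definition judgs_size :: "judg multiset \<Rightarrow> nat" where
  "judgs_size T = \<Sum>\<^sub># (image_mset tsz T)"

definition judg_measure :: "judg \<Rightarrow> (nat \<times> nat) multiset" where
  "judg_measure j = tC j + close (tsz j) (tO j)"
definition judgs_measure :: "judg multiset \<Rightarrow> (nat \<times> nat) multiset" where
  "judgs_measure T = \<Sum>\<^sub># (image_mset judg_measure T)"

(* The argument derivations T fit the domain M: one derivation per type of M, or a
   single derivation of arbitrary type if M is empty (so that erased arguments are still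
   typed, which is what makes typability imply strong normalisation). *)
definition args_for :: "ty multiset \<Rightarrow> judg multiset \<Rightarrow> bool" where
  "args_for M T \<longleftrightarrow> (if M = {#} then size T = 1 else image_mset tty T = M)"

(* The size n counts variable, abstraction and
   application nodes; a jump t[x/u] records the multiplicity of x as an open weight in H,
   which is closed when the jump is placed under an abstraction or in function position.
   The extra types W of an abstraction allow the domain to exceed the actual uses. *)
inductive typing :: "env \<Rightarrow> trm \<Rightarrow> ty \<Rightarrow> nat \<Rightarrow> (nat \<times> nat) multiset \<Rightarrow> nat multiset \<Rightarrow> bool" where
  tvar: "typing (single i \<sigma>) (Var i) \<sigma> (Suc 0) {#} {#}"
| tlam: "typing \<Gamma> t \<tau> n C H \<Longrightarrow> typing (rem 0 \<Gamma>) (Lam t) (Arr (\<Gamma> 0 + W) \<tau>) (Suc n) (C + close n H) {#}"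
| tapp: "typing \<Gamma> t (Arr M \<tau>) n C H \<Longrightarrow> args_for M T \<Longrightarrow>
     (\<forall>j\<in>#T. typing (tenv j) u (tty j) (tsz j) (tC j) (tO j)) \<Longrightarrow>
     typing (\<Gamma> \<oplus> judgs_env T) (App t u) \<tau> (Suc (n + judgs_size T)) (C + close n H + judgs_measure T) {#}"
| tsub: "typing \<Gamma> t \<tau> n C H \<Longrightarrow> args_for (\<Gamma> 0) T \<Longrightarrow>
     (\<forall>j\<in>#T. typing (tenv j) u (tty j) (tsz j) (tC j) (tO j)) \<Longrightarrow>
     typing (rem 0 \<Gamma> \<oplus> judgs_env T) (Sub t u) \<tau> (n + judgs_size T) (C + judgs_measure T) (add_mset (size (\<Gamma> 0)) H)"

inductive_cases typing_VarE: "typing \<Gamma> (Var i) \<tau> n C H"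
inductive_cases typing_LamE: "typing \<Gamma> (Lam t) \<tau> n C H"
inductive_cases typing_AppE: "typing \<Gamma> (App t u) \<tau> n C H"
inductive_cases typing_SubE: "typing \<Gamma> (Sub t u) \<tau> n C H"

abbreviation derives :: "judg \<Rightarrow> trm \<Rightarrow> bool" where
  "derives j u \<equiv> typing (tenv j) u (tty j) (tsz j) (tC j) (tO j)"

lemma judgs_env_empty[simp]: "judgs_env {#} = (\<lambda>_. {#})" by (simp add: judgs_env_def)
lemma judgs_env_add[simp]: "judgs_env (add_mset j T) = tenv j \<oplus> judgs_env T" by (simp add: judgs_env_def eadd_def)
lemma judgs_env_union[simp]: "judgs_env (T + U) = judgs_env T \<oplus> judgs_env U" by (simp add: judgs_env_def eadd_def)
lemma judgs_size_empty[simp]: "judgs_size {#} = 0" by (simp add: judgs_size_def)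
lemma judgs_size_add[simp]: "judgs_size (add_mset j T) = tsz j + judgs_size T" by (simp add: judgs_size_def)
lemma judgs_size_union[simp]: "judgs_size (T + U) = judgs_size T + judgs_size U" by (simp add: judgs_size_def)
lemma judgs_measure_empty[simp]: "judgs_measure {#} = {#}" by (simp add: judgs_measure_def)
lemma judgs_measure_add[simp]: "judgs_measure (add_mset j T) = judg_measure j + judgs_measure T" by (simp add: judgs_measure_def)
lemma judgs_measure_union[simp]: "judgs_measure (T + U) = judgs_measure T + judgs_measure U" by (simp add: judgs_measure_def)
lemma close_simps[simp]: "close b {#} = {#}" "close b (add_mset k H) = add_mset (b,k) (close b H)"
  "close b (H + P) = close b H + close b P"
  by (auto simp: close_def)

lemma eadd_apply: "(\<Gamma> \<oplus> \<Delta>) i = \<Gamma> i + \<Delta> i" by (simp add: eadd_def)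
lemma eadd_zero[simp]: "\<Gamma> \<oplus> (\<lambda>_. {#}) = \<Gamma>" "(\<lambda>_. {#}) \<oplus> \<Gamma> = \<Gamma>" by (auto simp: eadd_def)
lemma eadd_ac: "\<Gamma> \<oplus> \<Delta> = \<Delta> \<oplus> \<Gamma>" "(\<Gamma> \<oplus> \<Delta>) \<oplus> \<Theta> = \<Gamma> \<oplus> (\<Delta> \<oplus> \<Theta>)"
  "\<Gamma> \<oplus> (\<Delta> \<oplus> \<Theta>) = \<Delta> \<oplus> (\<Gamma> \<oplus> \<Theta>)"
  by (auto simp: eadd_def fun_eq_iff ac_simps)

lemma judgs_env_image_map:
  assumes "\<And>j. j \<in># T \<Longrightarrow> tenv (f j) = g (tenv j)"
    and "\<And>\<Gamma> \<Delta>. g (\<Gamma> \<oplus> \<Delta>) = g \<Gamma> \<oplus> g \<Delta>" and "g (\<lambda>_. {#}) = (\<lambda>_. {#})"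
  shows "judgs_env (image_mset f T) = g (judgs_env T)"
  using assms(1) by (induction T) (auto simp: assms(2,3))

lemma rem_eadd[simp]: "rem k (\<Gamma> \<oplus> \<Delta>) = rem k \<Gamma> \<oplus> rem k \<Delta>" by (auto simp: rem_def eadd_def)
lemma ins_eadd[simp]: "ins k (\<Gamma> \<oplus> \<Delta>) = ins k \<Gamma> \<oplus> ins k \<Delta>" by (auto simp: ins_def eadd_def)
lemma sw_eadd[simp]: "sw k (\<Gamma> \<oplus> \<Delta>) = sw k \<Gamma> \<oplus> sw k \<Delta>" by (auto simp: sw_def eadd_def)
lemma rem_zero[simp]: "rem k (\<lambda>_. {#}) = (\<lambda>_. {#})" by (auto simp: rem_def)
lemma ins_zero[simp]: "ins k (\<lambda>_. {#}) = (\<lambda>_. {#})" by (auto simp: ins_def)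
lemma sw_zero[simp]: "sw k (\<lambda>_. {#}) = (\<lambda>_. {#})" by (auto simp: sw_def)

lemma typing_pos: "typing \<Gamma> t \<tau> n C H \<Longrightarrow> n > 0"
  by (induction rule: typing.induct) auto

lemma args_for_nonempty: "args_for M T \<Longrightarrow> T \<noteq> {#}"
  by (auto simp: args_for_def split: if_splits)

lemma args_for_image: "(\<And>j. j \<in># T \<Longrightarrow> tty (f j) = tty j) \<Longrightarrow> args_for M (image_mset f T) = args_for M T"
proof -
  assume a: "\<And>j. j \<in># T \<Longrightarrow> tty (f j) = tty j"
  have "image_mset tty (image_mset f T) = image_mset tty T"
    by (simp add: multiset.map_comp a cong: image_mset_cong)
  then show ?thesis unfolding args_for_def by simp
qed

lemma judgs_size_image: "(\<And>j. j \<in># T \<Longrightarrow> tsz (f j) = tsz j) \<Longrightarrow> judgs_size (image_mset f T) = judgs_size T"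
  unfolding judgs_size_def by (simp add: multiset.map_comp cong: image_mset_cong)

lemma judgs_measure_image: "(\<And>j. j \<in># T \<Longrightarrow> judg_measure (f j) = judg_measure j) \<Longrightarrow> judgs_measure (image_mset f T) = judgs_measure T"
  unfolding judgs_measure_def by (simp add: multiset.map_comp cong: image_mset_cong)

definition mapenv :: "(env \<Rightarrow> env) \<Rightarrow> judg \<Rightarrow> judg" where
  "mapenv g j = Judg (g (tenv j)) (tty j) (tsz j) (tC j) (tO j)"
lemma mapenv_sel[simp]: "tenv (mapenv g j) = g (tenv j)" "tty (mapenv g j) = tty j"
  "tsz (mapenv g j) = tsz j" "tC (mapenv g j) = tC j" "tO (mapenv g j) = tO j"
  "judg_measure (mapenv g j) = judg_measure j"
  by (auto simp: mapenv_def judg_measure_def)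

lemma mapenv_props:
  assumes "\<And>\<Gamma> \<Delta>. g (\<Gamma> \<oplus> \<Delta>) = g \<Gamma> \<oplus> g \<Delta>" and "g (\<lambda>_. {#}) = (\<lambda>_. {#})"
  shows "judgs_env (image_mset (mapenv g) T) = g (judgs_env T)"
    "judgs_size (image_mset (mapenv g) T) = judgs_size T"
    "judgs_measure (image_mset (mapenv g) T) = judgs_measure T"
    "args_for M (image_mset (mapenv g) T) = args_for M T"
  apply (rule judgs_env_image_map) using assms apply auto[3]
  by (auto intro!: judgs_size_image judgs_measure_image args_for_image)

lemma ins_single: "ins k (single i \<sigma>) = single (if i < k then i else Suc i) \<sigma>"
  by (auto simp: ins_def single_def fun_eq_iff)
lemma rem_ins_Suc: "rem 0 (ins (Suc k) \<Gamma>) = ins k (rem 0 \<Gamma>)"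
  by (auto simp: ins_def rem_def fun_eq_iff)
lemma ins_Suc_0[simp]: "ins (Suc k) \<Gamma> 0 = \<Gamma> 0" by (simp add: ins_def)

lemma typing_lift: "typing \<Gamma> t \<tau> n C H \<Longrightarrow> typing (ins k \<Gamma>) (lift k t) \<tau> n C H"
proof (induction arbitrary: k rule: typing.induct)
  case (tvar i \<sigma>)
  then show ?case by (auto simp: ins_single intro: typing.tvar)
next
  case (tlam \<Gamma> t \<tau> n C H W)
  from typing.tlam[OF tlam.IH[of "Suc k"], of W] show ?case by (simp add: rem_ins_Suc)
next
  case (tapp \<Gamma> t M \<tau> n C H T u)
  have "typing (ins k \<Gamma> \<oplus> judgs_env (image_mset (mapenv (ins k)) T)) (App (lift k t) (lift k u)) \<tau>
     (Suc (n + judgs_size (image_mset (mapenv (ins k)) T))) (C + close n H + judgs_measure (image_mset (mapenv (ins k)) T)) {#}"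
    apply (rule typing.tapp[OF tapp.IH(1)])
    using tapp by (auto simp: mapenv_props)
  then show ?case by (simp add: mapenv_props)
next
  case (tsub \<Gamma> t \<tau> n C H T u)
  have "typing (rem 0 (ins (Suc k) \<Gamma>) \<oplus> judgs_env (image_mset (mapenv (ins k)) T)) (Sub (lift (Suc k) t) (lift k u)) \<tau>
     (n + judgs_size (image_mset (mapenv (ins k)) T)) (C + judgs_measure (image_mset (mapenv (ins k)) T)) (add_mset (size (ins (Suc k) \<Gamma> 0)) H)"
    apply (rule typing.tsub[OF tsub.IH(1)])
    using tsub by (auto simp: mapenv_props)
  then show ?case by (simp add: mapenv_props rem_ins_Suc)
qed

lemma rem_single: "i \<noteq> k \<Longrightarrow> rem k (single i \<sigma>) = single (if i < k then i else i - 1) \<sigma>"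
  by (auto simp: rem_def single_def fun_eq_iff)
lemma rem_rem_Suc: "rem 0 (rem (Suc k) \<Gamma>) = rem k (rem 0 \<Gamma>)"
  by (auto simp: rem_def fun_eq_iff)
lemma rem_Suc_0[simp]: "rem (Suc k) \<Gamma> 0 = \<Gamma> 0" by (simp add: rem_def)
lemma judgs_env_zero_at: "(\<And>j. j \<in># T \<Longrightarrow> tenv j k = {#}) \<Longrightarrow> judgs_env T k = {#}"
  by (induction T) (auto simp: eadd_apply)

lemma typing_unlift: "typing \<Gamma> (lift k t) \<tau> n C H \<Longrightarrow> \<Gamma> k = {#} \<and> typing (rem k \<Gamma>) t \<tau> n C H"
proof (induction t arbitrary: \<Gamma> \<tau> n C H k)
  case (Var i)
  then obtain j where j: "j = (if i < k then i else Suc i)" "\<Gamma> = single j \<tau>" "n = Suc 0" "C = {#}" "H = {#}"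
    by (auto elim!: typing_VarE split: if_splits)
  then have "j \<noteq> k" "rem k \<Gamma> = single i \<tau>" by (auto simp: rem_single)
  moreover have "\<Gamma> k = {#}" using j \<open>j \<noteq> k\<close> by (simp add: single_def)
  ultimately show ?case using j by (simp add: typing.tvar)
next
  case (Lam t)
  from Lam.prems obtain \<Gamma>' \<tau>' W n' C' H' where e: "\<Gamma> = rem 0 \<Gamma>'" "\<tau> = Arr (\<Gamma>' 0 + W) \<tau>'" "n = Suc n'"
     "C = C' + close n' H'" "H = {#}" and tt: "typing \<Gamma>' (lift (Suc k) t) \<tau>' n' C' H'"
    by (auto elim!: typing_LamE)
  from Lam.IH[OF tt] have "\<Gamma>' (Suc k) = {#}" and t2: "typing (rem (Suc k) \<Gamma>') t \<tau>' n' C' H'" by auto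
  have "\<Gamma> k = {#}" using e \<open>\<Gamma>' (Suc k) = {#}\<close> by (simp add: rem_def)
  with typing.tlam[OF t2, of W] show ?case using e by (auto simp: rem_rem_Suc)
next
  case (App t u)
  from App.prems obtain \<Gamma>' M n' C' H' T where e: "\<Gamma> = \<Gamma>' \<oplus> judgs_env T" "n = Suc (n' + judgs_size T)"
    "C = C' + close n' H' + judgs_measure T" "H = {#}" and tt: "typing \<Gamma>' (lift k t) (Arr M \<tau>) n' C' H'"
    and ok: "args_for M T" and tu: "\<forall>j\<in>#T. derives j (lift k u)"
    by (auto elim!: typing_AppE)
  from App.IH(1)[OF tt] have a: "\<Gamma>' k = {#}" "typing (rem k \<Gamma>') t (Arr M \<tau>) n' C' H'" by auto
  have b: "\<forall>j\<in>#T. tenv j k = {#} \<and> typing (rem k (tenv j)) u (tty j) (tsz j) (tC j) (tO j)"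
    using tu App.IH(2) by blast
  have "typing (rem k \<Gamma>' \<oplus> judgs_env (image_mset (mapenv (rem k)) T)) (App t u) \<tau>
     (Suc (n' + judgs_size (image_mset (mapenv (rem k)) T))) (C' + close n' H' + judgs_measure (image_mset (mapenv (rem k)) T)) {#}"
    apply (rule typing.tapp[OF a(2)]) using ok b by (auto simp: mapenv_props)
  moreover have "\<Gamma> k = {#}" using e a b by (auto simp: eadd_apply intro!: judgs_env_zero_at)
  ultimately show ?case using e by (auto simp: mapenv_props)
next
  case (Sub t u)
  from Sub.prems obtain \<Gamma>' n' C' H' T where e: "\<Gamma> = rem 0 \<Gamma>' \<oplus> judgs_env T" "n = n' + judgs_size T"
    "C = C' + judgs_measure T" "H = add_mset (size (\<Gamma>' 0)) H'" and tt: "typing \<Gamma>' (lift (Suc k) t) \<tau> n' C' H'"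
    and ok: "args_for (\<Gamma>' 0) T" and tu: "\<forall>j\<in>#T. derives j (lift k u)"
    by (auto elim!: typing_SubE)
  from Sub.IH(1)[OF tt] have a: "\<Gamma>' (Suc k) = {#}" "typing (rem (Suc k) \<Gamma>') t \<tau> n' C' H'" by auto
  have b: "\<forall>j\<in>#T. tenv j k = {#} \<and> typing (rem k (tenv j)) u (tty j) (tsz j) (tC j) (tO j)"
    using tu Sub.IH(2) by blast
  have "typing (rem 0 (rem (Suc k) \<Gamma>') \<oplus> judgs_env (image_mset (mapenv (rem k)) T)) (Sub t u) \<tau>
     (n' + judgs_size (image_mset (mapenv (rem k)) T)) (C' + judgs_measure (image_mset (mapenv (rem k)) T)) (add_mset (size (rem (Suc k) \<Gamma>' 0)) H')"
    apply (rule typing.tsub[OF a(2)]) using ok b by (auto simp: mapenv_props)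
  moreover have "\<Gamma> k = {#}" using e a b by (auto simp: eadd_apply rem_def intro!: judgs_env_zero_at)
  ultimately show ?case using e by (auto simp: mapenv_props rem_rem_Suc)
qed

lemma sw_single: "sw k (single i \<sigma>) = single (if i = k then Suc k else if i = Suc k then k else i) \<sigma>"
  by (auto simp: sw_def single_def fun_eq_iff)
lemma rem_sw_Suc: "rem 0 (sw (Suc k) \<Gamma>) = sw k (rem 0 \<Gamma>)"
  by (auto simp: sw_def rem_def fun_eq_iff)
lemma sw_Suc_0[simp]: "sw (Suc k) \<Gamma> 0 = \<Gamma> 0" by (simp add: sw_def)

lemma typing_swap: "typing \<Gamma> t \<tau> n C H \<Longrightarrow> typing (sw k \<Gamma>) (swap k t) \<tau> n C H"
proof (induction arbitrary: k rule: typing.induct)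
  case (tvar i \<sigma>)
  then show ?case by (auto simp: sw_single intro: typing.tvar)
next
  case (tlam \<Gamma> t \<tau> n C H W)
  from typing.tlam[OF tlam.IH[of "Suc k"], of W] show ?case by (simp add: rem_sw_Suc)
next
  case (tapp \<Gamma> t M \<tau> n C H T u)
  have "typing (sw k \<Gamma> \<oplus> judgs_env (image_mset (mapenv (sw k)) T)) (App (swap k t) (swap k u)) \<tau>
     (Suc (n + judgs_size (image_mset (mapenv (sw k)) T))) (C + close n H + judgs_measure (image_mset (mapenv (sw k)) T)) {#}"
    apply (rule typing.tapp[OF tapp.IH(1)])
    using tapp by (auto simp: mapenv_props)
  then show ?case by (simp add: mapenv_props)
next
  case (tsub \<Gamma> t \<tau> n C H T u)
  have "typing (rem 0 (sw (Suc k) \<Gamma>) \<oplus> judgs_env (image_mset (mapenv (sw k)) T)) (Sub (swap (Suc k) t) (swap k u)) \<tau>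
     (n + judgs_size (image_mset (mapenv (sw k)) T)) (C + judgs_measure (image_mset (mapenv (sw k)) T)) (add_mset (size (sw (Suc k) \<Gamma> 0)) H)"
    apply (rule typing.tsub[OF tsub.IH(1)])
    using tsub by (auto simp: mapenv_props)
  then show ?case by (simp add: mapenv_props rem_sw_Suc)
qed

lemma judgs_env_nonzero_at: "j \<in># T \<Longrightarrow> tenv j k \<noteq> {#} \<Longrightarrow> judgs_env T k \<noteq> {#}"
  by (induction T) (auto simp: eadd_apply)

lemma typing_occurs: "typing \<Gamma> t \<tau> n C H \<Longrightarrow> cnt k t > 0 \<Longrightarrow> \<Gamma> k \<noteq> {#}"
proof (induction arbitrary: k rule: typing.induct)
  case (tvar i \<sigma>)
  then show ?case by (auto simp: single_def split: if_splits)
next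
  case (tlam \<Gamma> t \<tau> n C H W)
  then show ?case by (auto simp: rem_def)
next
  case (tapp \<Gamma> t M \<tau> n C H T u)
  show ?case
  proof (cases "cnt k t > 0")
    case True then show ?thesis using tapp by (auto simp: eadd_apply)
  next
    case False
    then have "cnt k u > 0" using tapp by auto
    from args_for_nonempty[OF tapp(2)] obtain j where "j \<in># T" by blast
    then have "tenv j k \<noteq> {#}" using tapp.IH(2) \<open>cnt k u > 0\<close> by blast
    then show ?thesis using \<open>j \<in># T\<close> judgs_env_nonzero_at by (auto simp: eadd_apply)
  qed
next
  case (tsub \<Gamma> t \<tau> n C H T u)
  show ?case
  proof (cases "cnt (Suc k) t > 0")
    case True then show ?thesis using tsub by (auto simp: eadd_apply rem_def)
  next
    case False
    then have "cnt k u > 0" using tsub by auto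
    from args_for_nonempty[OF tsub(2)] obtain j where "j \<in># T" by blast
    then have "tenv j k \<noteq> {#}" using tsub.IH(2) \<open>cnt k u > 0\<close> by blast
    then show ?thesis using \<open>j \<in># T\<close> judgs_env_nonzero_at by (auto simp: eadd_apply)
  qed
qed

lemma args_for_same_image: "image_mset tty T' = image_mset tty T \<Longrightarrow> args_for M T' = args_for M T"
  unfolding args_for_def by (metis size_image_mset)

(* Substituting into the argument derivations TA of an application or jump: the
   derivations T for u, grouped by the index-k types of each a in TA, are distributed
   over TA. *)
lemma subst_args:
  assumes IH: "\<And>a T. a \<in># TA \<Longrightarrow> image_mset tty T = tenv a k \<Longrightarrow> \<forall>j\<in>#T. derives j u \<Longrightarrow>
      \<exists>n' C' H'. typing (rem k (tenv a) \<oplus> judgs_env T) (subst v k u) (tty a) n' C' H' \<and>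
        n' + size (tenv a k) = tsz a + judgs_size T"
    and "image_mset tty T = judgs_env TA k" and "\<forall>j\<in>#T. derives j u"
  shows "\<exists>TA'. image_mset tty TA' = image_mset tty TA \<and> judgs_env TA' = rem k (judgs_env TA) \<oplus> judgs_env T \<and>
     judgs_size TA' + size (judgs_env TA k) = judgs_size TA + judgs_size T \<and> (\<forall>a'\<in>#TA'. derives a' (subst v k u))"
  using assms
proof (induction TA arbitrary: T)
  case empty
  then show ?case by auto
next
  case (add a TA)
  from add.prems(2) have "image_mset tty T = tenv a k + judgs_env TA k" by (simp add: eadd_apply)
  from image_mset_eq_plusD[OF this] obtain Ta T0 where sp: "T = Ta + T0" "tenv a k = image_mset tty Ta"
    "judgs_env TA k = image_mset tty T0" by blast
  from add.prems(1)[of a Ta] sp add.prems(3) obtain n' C' H' where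
    a': "typing (rem k (tenv a) \<oplus> judgs_env Ta) (subst v k u) (tty a) n' C' H'"
      "n' + size (tenv a k) = tsz a + judgs_size Ta" by auto
  have IH0: "\<exists>n' C' H'. typing (rem k (tenv b) \<oplus> judgs_env Tb) (subst v k u) (tty b) n' C' H' \<and>
        n' + size (tenv b k) = tsz b + judgs_size Tb"
    if "b \<in># TA" "image_mset tty Tb = tenv b k" "\<forall>j\<in>#Tb. derives j u" for b Tb
    using add.prems(1)[of b Tb] that by simp
  have "\<forall>j\<in>#T0. derives j u" using add.prems(3) sp(1) by simp
  from add.IH[OF IH0 sp(3)[symmetric] this] obtain TA' where
    h: "image_mset tty TA' = image_mset tty TA" "judgs_env TA' = rem k (judgs_env TA) \<oplus> judgs_env T0"
     "judgs_size TA' + size (judgs_env TA k) = judgs_size TA + judgs_size T0" "\<forall>a'\<in>#TA'. derives a' (subst v k u)"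
    by blast
  show ?case
    apply (rule exI[of _ "add_mset (Judg (rem k (tenv a) \<oplus> judgs_env Ta) (tty a) n' C' H') TA'"])
    using a' h sp apply (auto simp: eadd_apply)
    by (auto simp: eadd_def rem_def fun_eq_iff ac_simps)
qed

lemma rem_ins[simp]: "rem k (ins k \<Gamma>) = \<Gamma>"
  by (auto simp: ins_def rem_def fun_eq_iff)
lemma ins0_0[simp]: "ins 0 \<Gamma> 0 = {#}" by (simp add: ins_def)

lemma rem_single_same: "rem k (single k \<sigma>) = (\<lambda>_. {#})"
  by (auto simp: rem_def single_def fun_eq_iff)

lemma image_single_D: "image_mset f T = {#x#} \<Longrightarrow> \<exists>j. T = {#j#} \<and> f j = x"
  using msed_map_invR[of f T x "{#}"] by auto

lemma typing_subst_var:
  assumes "\<forall>j\<in>#T. derives j u" and "image_mset tty T = single i \<sigma> k"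
  shows "\<exists>n' C' H'. typing (rem k (single i \<sigma>) \<oplus> judgs_env T) (subst (Var i) k u) \<sigma> n' C' H' \<and>
     n' + size (single i \<sigma> k) = Suc 0 + judgs_size T"
proof (cases "i = k")
  case True
  with assms have "image_mset tty T = {#\<sigma>#}" by (simp add: single_def)
  then obtain j where j: "T = {#j#}" "tty j = \<sigma>" using image_single_D[of tty T \<sigma>] by blast
  have sk: "single i \<sigma> k = {#\<sigma>#}" using True by (simp add: single_def)
  have tj: "typing (tenv j) u \<sigma> (tsz j) (tC j) (tO j)" using assms j by simp
  have "rem k (single i \<sigma>) \<oplus> judgs_env T = tenv j" using True j by (simp add: rem_single_same)
  moreover have "subst (Var i) k u = u" using True by simp
  ultimately show ?thesis using tj sk j by auto
next
  case False
  with assms have T0: "T = {#}" by (simp add: single_def)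
  have sk: "single i \<sigma> k = {#}" using False by (simp add: single_def)
  have "typing (single (if i < k then i else i - 1) \<sigma>) (Var (if i < k then i else i - 1)) \<sigma> (Suc 0) {#} {#}"
    by (rule typing.tvar)
  moreover have "subst (Var i) k u = Var (if i < k then i else i - 1)" using False by simp
  ultimately show ?thesis using sk T0 False by (auto simp: rem_single) (meson typing.tvar)+
qed

lemma typing_subst:
  "typing \<Gamma> t \<tau> n C H \<Longrightarrow> (\<forall>j\<in>#T. derives j u) \<Longrightarrow>
   image_mset tty T = \<Gamma> k \<Longrightarrow>
   \<exists>n' C' H'. typing (rem k \<Gamma> \<oplus> judgs_env T) (subst t k u) \<tau> n' C' H' \<and> n' + size (\<Gamma> k) = n + judgs_size T"
proof (induction arbitrary: k u T rule: typing.induct)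
  case (tvar i \<sigma>)
  then show ?case by (rule typing_subst_var)
next
  case (tlam \<Gamma> t \<tau> n C H W)
  let ?T = "image_mset (mapenv (ins 0)) T"
  have a: "\<forall>j\<in>#?T. derives j (lift 0 u)" using tlam.prems(1) typing_lift by auto
  have b: "image_mset tty ?T = \<Gamma> (Suc k)" using tlam.prems(2) by (simp add: multiset.map_comp comp_def rem_def)
  from tlam.IH[OF a b] obtain n' C' H' where
    c: "typing (rem (Suc k) \<Gamma> \<oplus> judgs_env ?T) (subst t (Suc k) (lift 0 u)) \<tau> n' C' H'" "n' + size (\<Gamma> (Suc k)) = n + judgs_size ?T" by blast
  from typing.tlam[OF c(1), of W] have "typing (rem k (rem 0 \<Gamma>) \<oplus> judgs_env T) (Lam (subst t (Suc k) (lift 0 u))) (Arr (\<Gamma> 0 + W) \<tau>) (Suc n') (C' + close n' H') {#}"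
    by (simp add: mapenv_props rem_rem_Suc eadd_apply)
  moreover have "rem 0 \<Gamma> k = \<Gamma> (Suc k)" by (simp add: rem_def)
  ultimately show ?case using c(2) by (auto simp: mapenv_props intro!: exI[where x="Suc n'"])
next
  case (tapp \<Gamma> t M \<tau> n C H TA v)
  from tapp.prems(2) have "image_mset tty T = \<Gamma> k + judgs_env TA k" by (simp add: eadd_apply)
  from image_mset_eq_plusD[OF this] obtain T1 T2 where sp: "T = T1 + T2" "\<Gamma> k = image_mset tty T1"
    "judgs_env TA k = image_mset tty T2" by blast
  from tapp.IH(1)[of T1 u k] tapp.prems sp obtain n1 C1 H1 where
    c: "typing (rem k \<Gamma> \<oplus> judgs_env T1) (subst t k u) (Arr M \<tau>) n1 C1 H1" "n1 + size (\<Gamma> k) = n + judgs_size T1" by auto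
  obtain TA' where d: "image_mset tty TA' = image_mset tty TA" "judgs_env TA' = rem k (judgs_env TA) \<oplus> judgs_env T2"
     "judgs_size TA' + size (judgs_env TA k) = judgs_size TA + judgs_size T2" "\<forall>a'\<in>#TA'. derives a' (subst v k u)"
  proof -
    have IHv: "\<exists>n' C' H'. typing (rem k (tenv a) \<oplus> judgs_env T') (subst v k u) (tty a) n' C' H' \<and>
        n' + size (tenv a k) = tsz a + judgs_size T'"
      if "a \<in># TA" "image_mset tty T' = tenv a k" "\<forall>j\<in>#T'. derives j u" for a T'
      using tapp.IH(2) that by blast
    have "\<forall>j\<in>#T2. derives j u" using tapp.prems(1) sp(1) by simp
    from subst_args[OF IHv sp(3)[symmetric] this] that show ?thesis by blast
  qed
  have ok: "args_for M TA'" using tapp(2) args_for_same_image[OF d(1)] by simp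
  from typing.tapp[OF c(1) ok d(4)] have "typing (rem k \<Gamma> \<oplus> judgs_env T1 \<oplus> judgs_env TA') (App (subst t k u) (subst v k u)) \<tau>
     (Suc (n1 + judgs_size TA')) (C1 + close n1 H1 + judgs_measure TA') {#}" .
  moreover have "rem k \<Gamma> \<oplus> judgs_env T1 \<oplus> judgs_env TA' = rem k (\<Gamma> \<oplus> judgs_env TA) \<oplus> judgs_env T"
    using d(2) sp(1) by (simp add: mapenv_props) (auto simp: eadd_def rem_def fun_eq_iff ac_simps)
  moreover have "Suc (n1 + judgs_size TA') + size ((\<Gamma> \<oplus> judgs_env TA) k) = Suc (n + judgs_size TA) + judgs_size T"
    using c(2) d(3) sp by (simp add: eadd_apply)
  ultimately show ?case by (auto intro!: exI[where x="Suc (n1 + judgs_size TA')"])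
next
  case (tsub \<Gamma> t \<tau> n C H TA v)
  from tsub.prems(2) have "image_mset tty T = \<Gamma> (Suc k) + judgs_env TA k" by (simp add: eadd_apply rem_def)
  from image_mset_eq_plusD[OF this] obtain T1 T2 where sp: "T = T1 + T2" "\<Gamma> (Suc k) = image_mset tty T1"
    "judgs_env TA k = image_mset tty T2" by blast
  let ?T = "image_mset (mapenv (ins 0)) T1"
  have a: "\<forall>j\<in>#?T. derives j (lift 0 u)" using tsub.prems(1) sp typing_lift by auto
  have b: "image_mset tty ?T = \<Gamma> (Suc k)" using sp by (simp add: multiset.map_comp comp_def)
  from tsub.IH(1)[OF a b] obtain n1 C1 H1 where
    c: "typing (rem (Suc k) \<Gamma> \<oplus> judgs_env ?T) (subst t (Suc k) (lift 0 u)) \<tau> n1 C1 H1" "n1 + size (\<Gamma> (Suc k)) = n + judgs_size ?T" by blast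
  obtain TA' where d: "image_mset tty TA' = image_mset tty TA" "judgs_env TA' = rem k (judgs_env TA) \<oplus> judgs_env T2"
     "judgs_size TA' + size (judgs_env TA k) = judgs_size TA + judgs_size T2" "\<forall>a'\<in>#TA'. derives a' (subst v k u)"
  proof -
    have IHv: "\<exists>n' C' H'. typing (rem k (tenv a) \<oplus> judgs_env T') (subst v k u) (tty a) n' C' H' \<and>
        n' + size (tenv a k) = tsz a + judgs_size T'"
      if "a \<in># TA" "image_mset tty T' = tenv a k" "\<forall>j\<in>#T'. derives j u" for a T'
      using tsub.IH(2) that by blast
    have "\<forall>j\<in>#T2. derives j u" using tsub.prems(1) sp(1) by simp
    from subst_args[OF IHv sp(3)[symmetric] this] that show ?thesis by blast
  qed
  have ok: "args_for ((rem (Suc k) \<Gamma> \<oplus> judgs_env ?T) 0) TA'" using tsub(2) args_for_same_image[OF d(1)]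
    by (simp add: eadd_apply mapenv_props)
  from typing.tsub[OF c(1) ok d(4)] have "typing (rem 0 (rem (Suc k) \<Gamma> \<oplus> judgs_env ?T) \<oplus> judgs_env TA') (Sub (subst t (Suc k) (lift 0 u)) (subst v k u)) \<tau>
     (n1 + judgs_size TA') (C1 + judgs_measure TA') (add_mset (size ((rem (Suc k) \<Gamma> \<oplus> judgs_env ?T) 0)) H1)" .
  moreover have "rem 0 (rem (Suc k) \<Gamma> \<oplus> judgs_env ?T) \<oplus> judgs_env TA' = rem k (rem 0 \<Gamma> \<oplus> judgs_env TA) \<oplus> judgs_env T"
    using d(2) sp(1) by (simp add: mapenv_props rem_rem_Suc) (auto simp: eadd_def rem_def ins_def fun_eq_iff ac_simps)
  moreover have "n1 + judgs_size TA' + size ((rem 0 \<Gamma> \<oplus> judgs_env TA) k) = n + judgs_size TA + judgs_size T"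
  proof -
    have "(rem 0 \<Gamma> \<oplus> judgs_env TA) k = \<Gamma> (Suc k) + judgs_env TA k" by (simp add: eadd_apply rem_def)
    then show ?thesis using c(2) d(3) sp by (simp add: mapenv_props)
  qed
  ultimately show ?case by (auto intro!: exI[where x="n1 + judgs_size TA'"])
qed

lemma splitenv_eadd: "splitenv i A B \<Gamma> \<oplus> splitenv i A' B' \<Delta> = splitenv i (A + A') (B + B') (\<Gamma> \<oplus> \<Delta>)"
  by (auto simp: splitenv_def eadd_def fun_eq_iff)

lemma renames_args:
  assumes "\<And>j. j \<in># T \<Longrightarrow> \<exists>A B. tenv j i = A + B \<and> typing (splitenv i A B (tenv j)) v (tty j) (tsz j) (tC j) (tO j)"
  shows "\<exists>A B T'. judgs_env T i = A + B \<and> judgs_env T' = splitenv i A B (judgs_env T) \<and> image_mset tty T' = image_mset tty T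
     \<and> judgs_size T' = judgs_size T \<and> judgs_measure T' = judgs_measure T \<and> (\<forall>j'\<in>#T'. derives j' v)"
  using assms
proof (induction T)
  case empty
  then show ?case by (auto intro!: exI[where x="{#}"] simp: splitenv_def fun_eq_iff)
next
  case (add j T)
  then obtain A B T' where h: "judgs_env T i = A + B" "judgs_env T' = splitenv i A B (judgs_env T)" "image_mset tty T' = image_mset tty T"
     "judgs_size T' = judgs_size T" "judgs_measure T' = judgs_measure T" "\<forall>j'\<in>#T'. derives j' v" by auto
  from add.prems[of j] obtain A1 B1 where g: "tenv j i = A1 + B1" "typing (splitenv i A1 B1 (tenv j)) v (tty j) (tsz j) (tC j) (tO j)"
    by auto
  show ?case
    apply (rule exI[where x="A1 + A"], rule exI[where x="B1 + B"],
        rule exI[where x="add_mset (Judg (splitenv i A1 B1 (tenv j)) (tty j) (tsz j) (tC j) (tO j)) T'"])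
    using h g apply (auto simp: splitenv_eadd judg_measure_def)
    by (simp add: eadd_def)
qed

lemma splitenv_single_lt: "j < i \<Longrightarrow> splitenv i {#} {#} (single j \<sigma>) = single j \<sigma>"
  by (auto simp: splitenv_def single_def fun_eq_iff)
lemma splitenv_single_gt: "i < j \<Longrightarrow> splitenv i {#} {#} (single j \<sigma>) = single (Suc j) \<sigma>"
  by (auto simp: splitenv_def single_def fun_eq_iff)
lemma splitenv_single_1: "splitenv i {#\<sigma>#} {#} (single i \<sigma>) = single i \<sigma>"
  by (auto simp: splitenv_def single_def fun_eq_iff)
lemma splitenv_single_2: "splitenv i {#} {#\<sigma>#} (single i \<sigma>) = single (Suc i) \<sigma>"
  by (auto simp: splitenv_def single_def fun_eq_iff)
lemma rem_splitenv_Suc: "rem 0 (splitenv (Suc i) A B \<Gamma>) = splitenv i A B (rem 0 \<Gamma>)"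
  by (auto simp: splitenv_def rem_def fun_eq_iff)
lemma splitenv_Suc_0[simp]: "splitenv (Suc i) A B \<Gamma> 0 = \<Gamma> 0" by (simp add: splitenv_def)

inductive_cases renames_VarE: "renames i (Var j) s"

lemma typing_renames_var:
  assumes "renames i (Var j) s" and "typing \<Gamma> (Var j) \<tau> n C H"
  shows "\<exists>A B. \<Gamma> i = A + B \<and> typing (splitenv i A B \<Gamma>) s \<tau> n C H"
proof -
  from assms(2) have e: "\<Gamma> = single j \<tau>" "n = Suc 0" "C = {#}" "H = {#}" by (auto elim!: typing_VarE)
  from assms(1) show ?thesis
  proof (rule renames_VarE)
    assume "j < i" "s = Var j"
    then have "\<Gamma> i = {#} + {#}" and "typing (splitenv i {#} {#} \<Gamma>) s \<tau> n C H"
      using e by (simp add: single_def, simp add: splitenv_single_lt typing.tvar)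
    then show ?thesis by blast
  next
    assume "j = i" "s = Var i"
    then have "\<Gamma> i = {#\<tau>#} + {#}" and "typing (splitenv i {#\<tau>#} {#} \<Gamma>) s \<tau> n C H"
      using e by (simp add: single_def, simp add: splitenv_single_1 typing.tvar)
    then show ?thesis by blast
  next
    assume "j = i" "s = Var (Suc i)"
    then have "\<Gamma> i = {#} + {#\<tau>#}" and "typing (splitenv i {#} {#\<tau>#} \<Gamma>) s \<tau> n C H"
      using e by (simp add: single_def, simp add: splitenv_single_2 typing.tvar)
    then show ?thesis by blast
  next
    assume "i < j" "s = Var (Suc j)"
    then have "\<Gamma> i = {#} + {#}" and "typing (splitenv i {#} {#} \<Gamma>) s \<tau> n C H"
      using e by (simp add: single_def, simp add: splitenv_single_gt typing.tvar)
    then show ?thesis by blast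
  qed
qed

lemma typing_renames: "renames i t s \<Longrightarrow> typing \<Gamma> t \<tau> n C H \<Longrightarrow>
   \<exists>A B. \<Gamma> i = A + B \<and> typing (splitenv i A B \<Gamma>) s \<tau> n C H"
proof (induction arbitrary: \<Gamma> \<tau> n C H rule: renames.induct)
  case (1 j i)
  then show ?case by (blast intro: typing_renames_var renames.intros)
next
  case (2 i)
  then show ?case by (blast intro: typing_renames_var renames.intros)
next
  case (3 i)
  then show ?case by (blast intro: typing_renames_var renames.intros)
next
  case (4 i j)
  then show ?case by (blast intro: typing_renames_var renames.intros)
next
  case (5 i t s)
  from 5(3) obtain \<Gamma>' \<tau>' W n' C' H' where e: "\<Gamma> = rem 0 \<Gamma>'" "\<tau> = Arr (\<Gamma>' 0 + W) \<tau>'" "n = Suc n'"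
     "C = C' + close n' H'" "H = {#}" and tt: "typing \<Gamma>' t \<tau>' n' C' H'"
    by (auto elim!: typing_LamE)
  from 5(2)[OF tt] obtain A B where ab: "\<Gamma>' (Suc i) = A + B" "typing (splitenv (Suc i) A B \<Gamma>') s \<tau>' n' C' H'" by blast
  from typing.tlam[OF ab(2), of W] have "typing (splitenv i A B (rem 0 \<Gamma>')) (Lam s) (Arr (\<Gamma>' 0 + W) \<tau>') (Suc n') (C' + close n' H') {#}"
    by (simp add: rem_splitenv_Suc)
  moreover have "\<Gamma> i = A + B" using e ab by (simp add: rem_def)
  ultimately show ?case using e by auto
next
  case (6 i t s u v)
  from 6(5) obtain \<Gamma>' M n' C' H' T where e: "\<Gamma> = \<Gamma>' \<oplus> judgs_env T" "n = Suc (n' + judgs_size T)"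
    "C = C' + close n' H' + judgs_measure T" "H = {#}" and tt: "typing \<Gamma>' t (Arr M \<tau>) n' C' H'"
    and ok: "args_for M T" and tu: "\<forall>j\<in>#T. derives j u"
    by (auto elim!: typing_AppE)
  from 6(3)[OF tt] obtain A B where ab: "\<Gamma>' i = A + B" "typing (splitenv i A B \<Gamma>') s (Arr M \<tau>) n' C' H'" by blast
  have "\<exists>A B. tenv j i = A + B \<and> typing (splitenv i A B (tenv j)) v (tty j) (tsz j) (tC j) (tO j)"
    if "j \<in># T" for j using tu 6(4) that by blast
  from renames_args[OF this] obtain A2 B2 T' where h: "judgs_env T i = A2 + B2" "judgs_env T' = splitenv i A2 B2 (judgs_env T)"
    "image_mset tty T' = image_mset tty T" "judgs_size T' = judgs_size T" "judgs_measure T' = judgs_measure T"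
    "\<forall>j'\<in>#T'. derives j' v" by blast
  have ok': "args_for M T'" using ok args_for_same_image[OF h(3)] by simp
  from typing.tapp[OF ab(2) ok' h(6)] have "typing (splitenv i (A + A2) (B + B2) \<Gamma>) (App s v) \<tau> n C H"
    using e h by (simp add: splitenv_eadd)
  moreover have "\<Gamma> i = (A + A2) + (B + B2)" using e ab h by (simp add: eadd_def ac_simps)
  ultimately show ?case by blast
next
  case (7 i t s u v)
  from 7(5) obtain \<Gamma>' n' C' H' T where e: "\<Gamma> = rem 0 \<Gamma>' \<oplus> judgs_env T" "n = n' + judgs_size T"
    "C = C' + judgs_measure T" "H = add_mset (size (\<Gamma>' 0)) H'" and tt: "typing \<Gamma>' t \<tau> n' C' H'"
    and ok: "args_for (\<Gamma>' 0) T" and tu: "\<forall>j\<in>#T. derives j u"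
    by (auto elim!: typing_SubE)
  from 7(3)[OF tt] obtain A B where ab: "\<Gamma>' (Suc i) = A + B" "typing (splitenv (Suc i) A B \<Gamma>') s \<tau> n' C' H'" by blast
  have "\<exists>A B. tenv j i = A + B \<and> typing (splitenv i A B (tenv j)) v (tty j) (tsz j) (tC j) (tO j)"
    if "j \<in># T" for j using tu 7(4) that by blast
  from renames_args[OF this] obtain A2 B2 T' where h: "judgs_env T i = A2 + B2" "judgs_env T' = splitenv i A2 B2 (judgs_env T)"
    "image_mset tty T' = image_mset tty T" "judgs_size T' = judgs_size T" "judgs_measure T' = judgs_measure T"
    "\<forall>j'\<in>#T'. derives j' v" by blast
  have ok': "args_for (splitenv (Suc i) A B \<Gamma>' 0) T'" using ok args_for_same_image[OF h(3)] by simp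
  from typing.tsub[OF ab(2) ok' h(6)] have "typing (splitenv i (A + A2) (B + B2) \<Gamma>) (Sub s v) \<tau> n C H"
    using e h by (simp add: splitenv_eadd rem_splitenv_Suc)
  moreover have "\<Gamma> i = (A + A2) + (B + B2)" using e ab h by (simp add: eadd_def rem_def ac_simps)
  ultimately show ?case by blast
qed

section \<open>The measure decreases along lambda-j-in steps\<close>

definition decreases :: "env \<Rightarrow> nat \<Rightarrow> (nat \<times> nat) multiset \<Rightarrow> nat multiset \<Rightarrow> env \<Rightarrow> nat \<Rightarrow> (nat \<times> nat) multiset \<Rightarrow> nat multiset \<Rightarrow> bool" where
  "decreases \<Gamma> n C H \<Gamma>' n' C' H' \<longleftrightarrow> (n' < n \<and> env_sub \<Gamma>' \<Gamma>) \<or> (n' = n \<and> \<Gamma>' = \<Gamma> \<and> (\<forall>B\<ge>n. C' + close B H' < C + close B H))"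

definition typed_decrease :: "trm \<Rightarrow> trm \<Rightarrow> bool" where
  "typed_decrease t u \<longleftrightarrow> (\<forall>\<Gamma> \<tau> n C H. typing \<Gamma> t \<tau> n C H \<longrightarrow>
     (\<exists>\<Gamma>' n' C' H'. typing \<Gamma>' u \<tau> n' C' H' \<and> decreases \<Gamma> n C H \<Gamma>' n' C' H'))"

lemma multiset_less_dominated: "J \<noteq> {#} \<Longrightarrow> (\<forall>k\<in>#K. \<exists>j\<in>#J. k < j) \<Longrightarrow> I + K < I + (J :: ('a::preorder) multiset)"
  unfolding less_multiset_def by (rule one_step_implies_multp)

lemma env_sub_refl[simp]: "env_sub \<Gamma> \<Gamma>" by (simp add: env_sub_def)
lemma env_sub_eadd: "env_sub \<Gamma> \<Gamma>' \<Longrightarrow> env_sub \<Delta> \<Delta>' \<Longrightarrow> env_sub (\<Gamma> \<oplus> \<Delta>) (\<Gamma>' \<oplus> \<Delta>')"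
  by (auto simp: env_sub_def eadd_def intro: subset_mset.add_mono)
lemma env_sub_addR: "env_sub \<Gamma> (\<Gamma> \<oplus> \<Delta>)" by (auto simp: env_sub_def eadd_def)
lemma env_sub_rem: "env_sub \<Gamma> \<Gamma>' \<Longrightarrow> env_sub (rem k \<Gamma>) (rem k \<Gamma>')" by (auto simp: env_sub_def rem_def)

lemma judgs_env_mono: "T' \<subseteq># T \<Longrightarrow> env_sub (judgs_env T') (judgs_env T)"
proof -
  assume "T' \<subseteq># T"
  then obtain U where "T = T' + U" by (metis subset_mset.add_diff_inverse)
  then show ?thesis by (simp add: env_sub_addR)
qed
lemma judgs_size_mono: "T' \<subseteq># T \<Longrightarrow> judgs_size T' \<le> judgs_size T"
proof -
  assume "T' \<subseteq># T"
  then obtain U where "T = T' + U" by (metis subset_mset.add_diff_inverse)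
  then show ?thesis by simp
qed

lemma args_shrink: "args_for M T \<Longrightarrow> M' \<subseteq># M \<Longrightarrow> \<exists>T'. T' \<subseteq># T \<and> args_for M' T'"
proof -
  assume ok: "args_for M T" and sub: "M' \<subseteq># M"
  show ?thesis
  proof (cases "M' = {#}")
    case True
    show ?thesis
    proof (cases "M = {#}")
      case True then show ?thesis using ok \<open>M' = {#}\<close> by auto
    next
      case False
      with ok have "T \<noteq> {#}" using args_for_nonempty by blast
      then obtain j where "j \<in># T" by blast
      then show ?thesis using \<open>M' = {#}\<close> by (intro exI[where x="{#j#}"]) (auto simp: args_for_def)
    qed
  next
    case False
    with sub have "M \<noteq> {#}" by auto
    with ok have im: "image_mset tty T = M' + (M - M')" by (simp add: args_for_def sub)
    from image_mset_eq_plusD[OF im] obtain T1 T2 where "T = T1 + T2" "M' = image_mset tty T1" by blast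
    then show ?thesis using False by (intro exI[where x=T1]) (auto simp: args_for_def)
  qed
qed

lemma judgs_size_pos: "args_for M T \<Longrightarrow> \<forall>j\<in>#T. derives j u \<Longrightarrow> judgs_size T > 0"
proof -
  assume "args_for M T" "\<forall>j\<in>#T. derives j u"
  then obtain j where "j \<in># T" "tsz j > 0" using args_for_nonempty typing_pos by blast
  then obtain U where "T = add_mset j U" by (metis mset_add)
  then show ?thesis using \<open>tsz j > 0\<close> by simp
qed

(* Rule w: erasing a jump whose variable does not occur drops the argument derivations. *)
lemma root_w: "typing \<Gamma> (Sub (lift 0 t) u) \<tau> n C H \<Longrightarrow> \<exists>\<Gamma>' n' C' H'. typing \<Gamma>' t \<tau> n' C' H' \<and> n' < n \<and> env_sub \<Gamma>' \<Gamma>"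
proof -
  assume "typing \<Gamma> (Sub (lift 0 t) u) \<tau> n C H"
  then obtain \<Gamma>1 n1 C1 H1 T where e: "\<Gamma> = rem 0 \<Gamma>1 \<oplus> judgs_env T" "n = n1 + judgs_size T"
    and tt: "typing \<Gamma>1 (lift 0 t) \<tau> n1 C1 H1"
    and ok: "args_for (\<Gamma>1 0) T" and tu: "\<forall>j\<in>#T. derives j u"
    by (auto elim!: typing_SubE)
  from typing_unlift[OF tt] have "typing (rem 0 \<Gamma>1) t \<tau> n1 C1 H1" by blast
  moreover have "judgs_size T > 0" using judgs_size_pos[OF ok tu] .
  ultimately have "typing (rem 0 \<Gamma>1) t \<tau> n1 C1 H1 \<and> n1 < n \<and> env_sub (rem 0 \<Gamma>1) \<Gamma>" using e by (auto intro!: env_sub_addR)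
  then show ?thesis by blast
qed

(* Rule d: a linear jump is executed by the substitution lemma, decreasing the size. *)
lemma root_d: "cnt 0 t = 1 \<Longrightarrow> typing \<Gamma> (Sub t u) \<tau> n C H \<Longrightarrow> \<exists>n' C' H'. typing \<Gamma> (subst t 0 u) \<tau> n' C' H' \<and> n' < n"
proof -
  assume c: "cnt 0 t = 1" and "typing \<Gamma> (Sub t u) \<tau> n C H"
  then obtain \<Gamma>1 n1 C1 H1 T where e: "\<Gamma> = rem 0 \<Gamma>1 \<oplus> judgs_env T" "n = n1 + judgs_size T"
    and tt: "typing \<Gamma>1 t \<tau> n1 C1 H1"
    and ok: "args_for (\<Gamma>1 0) T" and tu: "\<forall>j\<in>#T. derives j u"
    by (auto elim!: typing_SubE)
  have ne: "\<Gamma>1 0 \<noteq> {#}" using typing_occurs[OF tt] c by auto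
  with ok have "image_mset tty T = \<Gamma>1 0" by (simp add: args_for_def)
  from typing_subst[OF tt tu this] obtain n' C' H' where "typing \<Gamma> (subst t 0 u) \<tau> n' C' H'" "n' + size (\<Gamma>1 0) = n1 + judgs_size T"
    using e by blast
  moreover have "size (\<Gamma>1 0) > 0" using ne by (simp add: nonempty_has_size)
  ultimately show ?thesis using e by (intro exI[where x=n']) auto
qed

lemma rem_rem_splitenv0: "rem 0 (rem 0 (splitenv 0 A B \<Gamma>)) = rem 0 \<Gamma>"
  by (auto simp: rem_def splitenv_def fun_eq_iff)

(* Rule c: duplicating a jump keeps the size, and replaces the open weight |A + B| by the
   two smaller weights |A| and |B|. *)
lemma root_c: "cnt 0 t \<ge> 2 \<Longrightarrow> renames 0 t s \<Longrightarrow> cnt 0 s \<ge> 1 \<Longrightarrow> cnt 1 s \<ge> 1 \<Longrightarrow>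
  typing \<Gamma> (Sub t u) \<tau> n C H \<Longrightarrow>
  \<exists>C' H'. typing \<Gamma> (Sub (Sub s (lift 0 u)) u) \<tau> n C' H' \<and> (\<forall>B\<ge>n. C' + close B H' < C + close B H)"
proof -
  assume r: "renames 0 t s" and c0: "cnt 0 s \<ge> 1" and c1: "cnt 1 s \<ge> 1" and "typing \<Gamma> (Sub t u) \<tau> n C H"
  then obtain \<Gamma>1 n1 C1 H1 T where e: "\<Gamma> = rem 0 \<Gamma>1 \<oplus> judgs_env T" "n = n1 + judgs_size T" "C = C1 + judgs_measure T"
    "H = add_mset (size (\<Gamma>1 0)) H1"
    and tt: "typing \<Gamma>1 t \<tau> n1 C1 H1"
    and ok: "args_for (\<Gamma>1 0) T" and tu: "\<forall>j\<in>#T. derives j u"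
    by (auto elim!: typing_SubE)
  from typing_renames[OF r tt] obtain A B where ab: "\<Gamma>1 0 = A + B" and ts: "typing (splitenv 0 A B \<Gamma>1) s \<tau> n1 C1 H1" by blast
  have "splitenv 0 A B \<Gamma>1 0 \<noteq> {#}" using typing_occurs[OF ts] c0 by auto
  then have An: "A \<noteq> {#}" by (simp add: splitenv_def)
  have "splitenv 0 A B \<Gamma>1 1 \<noteq> {#}" using typing_occurs[OF ts] c1 by auto
  then have Bn: "B \<noteq> {#}" by (simp add: splitenv_def)
  from ok ab An have "image_mset tty T = A + B" by (simp add: args_for_def)
  from image_mset_eq_plusD[OF this] obtain TA TB where sp: "T = TA + TB" "A = image_mset tty TA"
    "B = image_mset tty TB" by blast
  let ?TA = "image_mset (mapenv (ins 0)) TA"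
  have okA: "args_for (splitenv 0 A B \<Gamma>1 0) ?TA" using sp An by (simp add: args_for_def splitenv_def multiset.map_comp comp_def)
  have tuA: "\<forall>j\<in>#?TA. derives j (lift 0 u)" using tu sp typing_lift by auto
  from typing.tsub[OF ts okA tuA] have inner: "typing (rem 0 (splitenv 0 A B \<Gamma>1) \<oplus> ins 0 (judgs_env TA)) (Sub s (lift 0 u)) \<tau>
     (n1 + judgs_size TA) (C1 + judgs_measure TA) (add_mset (size A) H1)"
    by (simp add: mapenv_props splitenv_def)
  have okB: "args_for ((rem 0 (splitenv 0 A B \<Gamma>1) \<oplus> ins 0 (judgs_env TA)) 0) TB"
    using sp Bn by (simp add: args_for_def splitenv_def rem_def eadd_def)
  have tuB: "\<forall>j\<in>#TB. derives j u" using tu sp by auto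
  from typing.tsub[OF inner okB tuB] have X:
    "typing (rem 0 (rem 0 (splitenv 0 A B \<Gamma>1) \<oplus> ins 0 (judgs_env TA)) \<oplus> judgs_env TB) (Sub (Sub s (lift 0 u)) u) \<tau>
     (n1 + judgs_size TA + judgs_size TB) (C1 + judgs_measure TA + judgs_measure TB) (add_mset (size B) (add_mset (size A) H1))"
    using sp Bn by (simp add: splitenv_def rem_def eadd_def)
  have "rem 0 (rem 0 (splitenv 0 A B \<Gamma>1) \<oplus> ins 0 (judgs_env TA)) \<oplus> judgs_env TB = \<Gamma>"
    using e sp by (simp add: rem_rem_splitenv0 eadd_ac)
  with X e sp have Y: "typing \<Gamma> (Sub (Sub s (lift 0 u)) u) \<tau> n (C1 + judgs_measure TA + judgs_measure TB) (add_mset (size B) (add_mset (size A) H1))"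
    by (simp add: ac_simps)
  have "\<forall>B0\<ge>n. (C1 + judgs_measure TA + judgs_measure TB) + close B0 (add_mset (size B) (add_mset (size A) H1)) < C + close B0 H"
  proof (intro allI impI)
    fix B0
    have "(C + close B0 H1) + {#(B0, size A), (B0, size B)#} < (C + close B0 H1) + {#(B0, size A + size B)#}"
      using An Bn by (intro multiset_less_dominated) (auto simp: nonempty_has_size)
    then show "(C1 + judgs_measure TA + judgs_measure TB) + close B0 (add_mset (size B) (add_mset (size A) H1)) < C + close B0 H"
      using e sp ab by (simp add: ac_simps)
  qed
  with Y show ?thesis by blast
qed

lemma close_lt: "(\<forall>x\<in>#K. fst x < B) \<Longrightarrow> \<forall>k\<in>#K. \<exists>j\<in>#J + {#(B, b)#}. k < j"
  by (metis add_mset_add_single less_prod_simp prod.collapse union_single_eq_member)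

(* Rule in1: moving a jump under an abstraction closes its weight at a smaller size. *)
lemma root_in1: "typing \<Gamma> (Sub (Lam t) u) \<tau> n C H \<Longrightarrow>
  \<exists>C' H'. typing \<Gamma> (Lam (Sub (swap 0 t) (lift 0 u))) \<tau> n C' H' \<and> (\<forall>B\<ge>n. C' + close B H' < C + close B H)"
proof -
  assume "typing \<Gamma> (Sub (Lam t) u) \<tau> n C H"
  then obtain \<Gamma>1 n1 C1 H1 T where e: "\<Gamma> = rem 0 \<Gamma>1 \<oplus> judgs_env T" "n = n1 + judgs_size T" "C = C1 + judgs_measure T"
    "H = add_mset (size (\<Gamma>1 0)) H1"
    and tt: "typing \<Gamma>1 (Lam t) \<tau> n1 C1 H1"
    and ok: "args_for (\<Gamma>1 0) T" and tu: "\<forall>j\<in>#T. derives j u"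
    by (auto elim!: typing_SubE)
  from tt obtain \<Gamma>2 \<tau>' W n2 C2 H2 where e2: "\<Gamma>1 = rem 0 \<Gamma>2" "\<tau> = Arr (\<Gamma>2 0 + W) \<tau>'" "n1 = Suc n2"
     "C1 = C2 + close n2 H2" "H1 = {#}" and t2: "typing \<Gamma>2 t \<tau>' n2 C2 H2"
    by (auto elim!: typing_LamE)
  from typing_swap[OF t2, of 0] have ts: "typing (sw 0 \<Gamma>2) (swap 0 t) \<tau>' n2 C2 H2" .
  let ?T = "image_mset (mapenv (ins 0)) T"
  have ok': "args_for (sw 0 \<Gamma>2 0) ?T" using ok e2 by (simp add: mapenv_props sw_def rem_def)
  have tu': "\<forall>j\<in>#?T. derives j (lift 0 u)" using tu typing_lift by auto
  from typing.tsub[OF ts ok' tu'] have i: "typing (rem 0 (sw 0 \<Gamma>2) \<oplus> ins 0 (judgs_env T)) (Sub (swap 0 t) (lift 0 u)) \<tau>'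
     (n2 + judgs_size T) (C2 + judgs_measure T) (add_mset (size (\<Gamma>1 0)) H2)"
    using e2 by (simp add: mapenv_props sw_def rem_def)
  from typing.tlam[OF i, of W] have
    "typing (rem 0 (rem 0 (sw 0 \<Gamma>2) \<oplus> ins 0 (judgs_env T))) (Lam (Sub (swap 0 t) (lift 0 u))) (Arr ((rem 0 (sw 0 \<Gamma>2) \<oplus> ins 0 (judgs_env T)) 0 + W) \<tau>')
      (Suc (n2 + judgs_size T)) (C2 + judgs_measure T + close (n2 + judgs_size T) (add_mset (size (\<Gamma>1 0)) H2)) {#}" .
  moreover have "(rem 0 (sw 0 \<Gamma>2) \<oplus> ins 0 (judgs_env T)) 0 = \<Gamma>2 0" by (simp add: eadd_def rem_def sw_def)
  moreover have "rem 0 (rem 0 (sw 0 \<Gamma>2) \<oplus> ins 0 (judgs_env T)) = \<Gamma>"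
    using e e2 by (auto simp: rem_def sw_def eadd_def ins_def fun_eq_iff)
  ultimately have Y: "typing \<Gamma> (Lam (Sub (swap 0 t) (lift 0 u))) \<tau> n (C2 + judgs_measure T + close (n2 + judgs_size T) (add_mset (size (\<Gamma>1 0)) H2)) {#}"
    using e e2 by simp
  have "\<forall>B\<ge>n. C2 + judgs_measure T + close (n2 + judgs_size T) (add_mset (size (\<Gamma>1 0)) H2) + close B {#} < C + close B H"
  proof (intro allI impI)
    fix B assume "B \<ge> n"
    then have lt: "n2 + judgs_size T < B" using e e2 by simp
    have "(C2 + judgs_measure T) + close (n2 + judgs_size T) (add_mset (size (\<Gamma>1 0)) H2) < (C2 + judgs_measure T) + (close n2 H2 + {#(B, size (\<Gamma>1 0))#})"
      apply (rule multiset_less_dominated) apply simp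
      apply (rule close_lt) using lt by (auto simp: close_def)
    then show "C2 + judgs_measure T + close (n2 + judgs_size T) (add_mset (size (\<Gamma>1 0)) H2) + close B {#} < C + close B H"
      using e e2 by (simp add: ac_simps)
  qed
  with Y show ?thesis by blast
qed

lemma root_in2: "typing \<Gamma> (Sub (App t (lift 0 v)) u) \<tau> n C H \<Longrightarrow>
  \<exists>C' H'. typing \<Gamma> (App (Sub t u) v) \<tau> n C' H' \<and> (\<forall>B\<ge>n. C' + close B H' < C + close B H)"
proof -
  assume "typing \<Gamma> (Sub (App t (lift 0 v)) u) \<tau> n C H"
  then obtain \<Gamma>1 n1 C1 H1 T where e: "\<Gamma> = rem 0 \<Gamma>1 \<oplus> judgs_env T" "n = n1 + judgs_size T" "C = C1 + judgs_measure T"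
    "H = add_mset (size (\<Gamma>1 0)) H1"
    and tt: "typing \<Gamma>1 (App t (lift 0 v)) \<tau> n1 C1 H1"
    and ok: "args_for (\<Gamma>1 0) T" and tu: "\<forall>j\<in>#T. derives j u"
    by (auto elim!: typing_SubE)
  from tt obtain \<Gamma>2 M n2 C2 H2 TV where e2: "\<Gamma>1 = \<Gamma>2 \<oplus> judgs_env TV" "n1 = Suc (n2 + judgs_size TV)"
    "C1 = C2 + close n2 H2 + judgs_measure TV" "H1 = {#}" and t2: "typing \<Gamma>2 t (Arr M \<tau>) n2 C2 H2"
    and okv: "args_for M TV" and tv: "\<forall>j\<in>#TV. derives j (lift 0 v)"
    by (auto elim!: typing_AppE)
  have tv': "\<forall>j\<in>#TV. tenv j 0 = {#} \<and> typing (rem 0 (tenv j)) v (tty j) (tsz j) (tC j) (tO j)"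
    using tv typing_unlift by blast
  then have z: "judgs_env TV 0 = {#}" by (intro judgs_env_zero_at) auto
  let ?TV = "image_mset (mapenv (rem 0)) TV"
  have ok2: "args_for (\<Gamma>2 0) T" using ok e2 z by (simp add: eadd_def)
  from typing.tsub[OF t2 ok2 tu] have i: "typing (rem 0 \<Gamma>2 \<oplus> judgs_env T) (Sub t u) (Arr M \<tau>) (n2 + judgs_size T) (C2 + judgs_measure T) (add_mset (size (\<Gamma>2 0)) H2)" .
  have okv': "args_for M ?TV" using okv by (simp add: mapenv_props)
  have tv2: "\<forall>j\<in>#?TV. derives j v" using tv' by auto
  from typing.tapp[OF i okv' tv2] have X: "typing (rem 0 \<Gamma>2 \<oplus> judgs_env T \<oplus> rem 0 (judgs_env TV)) (App (Sub t u) v) \<tau>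
      (Suc (n2 + judgs_size T + judgs_size TV)) (C2 + judgs_measure T + close (n2 + judgs_size T) (add_mset (size (\<Gamma>2 0)) H2) + judgs_measure TV) {#}"
    by (simp add: mapenv_props)
  have "rem 0 \<Gamma>2 \<oplus> judgs_env T \<oplus> rem 0 (judgs_env TV) = \<Gamma>" using e e2 by (simp add: eadd_ac)
  with X e e2 have Y: "typing \<Gamma> (App (Sub t u) v) \<tau> n (C2 + judgs_measure T + close (n2 + judgs_size T) (add_mset (size (\<Gamma>2 0)) H2) + judgs_measure TV) {#}"
    by (simp add: ac_simps)
  have "\<forall>B\<ge>n. (C2 + judgs_measure T + close (n2 + judgs_size T) (add_mset (size (\<Gamma>2 0)) H2) + judgs_measure TV) + close B {#} < C + close B H"
  proof (intro allI impI)
    fix B assume "B \<ge> n"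
    then have lt: "n2 + judgs_size T < B" using e e2 by simp
    have "(C2 + judgs_measure T + judgs_measure TV) + close (n2 + judgs_size T) (add_mset (size (\<Gamma>2 0)) H2) < (C2 + judgs_measure T + judgs_measure TV) + (close n2 H2 + {#(B, size (\<Gamma>2 0))#})"
      apply (rule multiset_less_dominated) apply simp
      apply (rule close_lt) using lt by (auto simp: close_def)
    moreover have "\<Gamma>1 0 = \<Gamma>2 0" using e2 z by (simp add: eadd_def)
    ultimately show "(C2 + judgs_measure T + close (n2 + judgs_size T) (add_mset (size (\<Gamma>2 0)) H2) + judgs_measure TV) + close B {#} < C + close B H"
      using e e2 by (simp add: ac_simps)
  qed
  with Y show ?thesis by blast
qed

definition judgs_C :: "judg multiset \<Rightarrow> (nat \<times> nat) multiset" where "judgs_C T = \<Sum>\<^sub># (image_mset tC T)"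
definition judgs_closed_O :: "judg multiset \<Rightarrow> (nat \<times> nat) multiset" where "judgs_closed_O T = \<Sum>\<^sub># (image_mset (\<lambda>a. close (tsz a) (tO a)) T)"
lemma judgs_measure_split: "judgs_measure T = judgs_C T + judgs_closed_O T"
  by (induction T) (auto simp: judgs_measure_def judgs_C_def judgs_closed_O_def judg_measure_def ac_simps)
lemma judgs_C_simps[simp]: "judgs_C {#} = {#}" "judgs_C (add_mset a T) = tC a + judgs_C T" by (auto simp: judgs_C_def)

lemma push_jump_args:
  assumes "\<forall>a\<in>#TA. \<forall>Ta. image_mset tty Ta = tenv a 0 \<and> (\<forall>j\<in>#Ta. Q j) \<longrightarrow>
      (\<exists>a'. tty a' = tty a \<and> tenv a' = rem 0 (tenv a) \<oplus> judgs_env Ta \<and> tsz a' = tsz a + judgs_size Ta \<and>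
         (\<exists>K. judg_measure a' = tC a + judgs_measure Ta + K \<and> (\<forall>x\<in>#K. fst x \<le> tsz a + judgs_size Ta)) \<and> P a')"
    and "image_mset tty T = judgs_env TA 0" and "\<forall>j\<in>#T. Q j"
  shows "\<exists>TA'. image_mset tty TA' = image_mset tty TA \<and> judgs_env TA' = rem 0 (judgs_env TA) \<oplus> judgs_env T \<and>
     judgs_size TA' = judgs_size TA + judgs_size T \<and> (\<exists>K. judgs_measure TA' = judgs_C TA + judgs_measure T + K \<and> (\<forall>x\<in>#K. fst x \<le> judgs_size TA + judgs_size T)) \<and> (\<forall>a'\<in>#TA'. P a')"
  using assms
proof (induction TA arbitrary: T)
  case empty
  then show ?case by auto
next
  case (add a TA)
  from add.prems(2) have "image_mset tty T = tenv a 0 + judgs_env TA 0" by (simp add: eadd_def)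
  from image_mset_eq_plusD[OF this] obtain Ta T0 where sp: "T = Ta + T0" "tenv a 0 = image_mset tty Ta"
    "judgs_env TA 0 = image_mset tty T0" by blast
  from add.prems(1) sp add.prems(3) obtain a' K1 where a': "tty a' = tty a" "tenv a' = rem 0 (tenv a) \<oplus> judgs_env Ta"
     "tsz a' = tsz a + judgs_size Ta" "judg_measure a' = tC a + judgs_measure Ta + K1" "\<forall>x\<in>#K1. fst x \<le> tsz a + judgs_size Ta" "P a'" by force
  from add.IH[of T0] add.prems sp obtain TA' K0 where
    h: "image_mset tty TA' = image_mset tty TA" "judgs_env TA' = rem 0 (judgs_env TA) \<oplus> judgs_env T0"
     "judgs_size TA' = judgs_size TA + judgs_size T0" "judgs_measure TA' = judgs_C TA + judgs_measure T0 + K0" "\<forall>x\<in>#K0. fst x \<le> judgs_size TA + judgs_size T0" "\<forall>a'\<in>#TA'. P a'"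
    by auto
  have "image_mset tty (add_mset a' TA') = image_mset tty (add_mset a TA) \<and> judgs_env (add_mset a' TA') = rem 0 (judgs_env (add_mset a TA)) \<oplus> judgs_env T \<and>
     judgs_size (add_mset a' TA') = judgs_size (add_mset a TA) + judgs_size T \<and> judgs_measure (add_mset a' TA') = judgs_C (add_mset a TA) + judgs_measure T + (K1 + K0) \<and>
     (\<forall>x\<in>#K1 + K0. fst x \<le> judgs_size (add_mset a TA) + judgs_size T) \<and> (\<forall>a'\<in>#add_mset a' TA'. P a')"
    using a' h sp by (auto simp: eadd_ac ac_simps)
  then show ?case by blast
qed

lemma push_jump_arg:
  assumes ta: "derives a v" and ne: "tenv a 0 \<noteq> {#}"
    and im: "image_mset tty Ta = tenv a 0" and tu: "\<forall>j\<in>#Ta. derives j u"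
  shows "\<exists>a'. tty a' = tty a \<and> tenv a' = rem 0 (tenv a) \<oplus> judgs_env Ta \<and> tsz a' = tsz a + judgs_size Ta \<and>
         (\<exists>K. judg_measure a' = tC a + judgs_measure Ta + K \<and> (\<forall>x\<in>#K. fst x \<le> tsz a + judgs_size Ta)) \<and>
         derives a' (Sub v u)"
proof -
  have ok: "args_for (tenv a 0) Ta" using ne im by (simp add: args_for_def)
  from typing.tsub[OF ta ok tu] have X: "typing (rem 0 (tenv a) \<oplus> judgs_env Ta) (Sub v u) (tty a) (tsz a + judgs_size Ta) (tC a + judgs_measure Ta) (add_mset (size (tenv a 0)) (tO a))" .
  let ?a = "Judg (rem 0 (tenv a) \<oplus> judgs_env Ta) (tty a) (tsz a + judgs_size Ta) (tC a + judgs_measure Ta) (add_mset (size (tenv a 0)) (tO a))"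
  have "judg_measure ?a = tC a + judgs_measure Ta + close (tsz a + judgs_size Ta) (add_mset (size (tenv a 0)) (tO a))" by (simp add: judg_measure_def)
  moreover have "\<forall>x\<in>#close (tsz a + judgs_size Ta) (add_mset (size (tenv a 0)) (tO a)). fst x \<le> tsz a + judgs_size Ta"
    by (auto simp: close_def)
  ultimately show ?thesis using X by (intro exI[where x="?a"]) auto
qed

lemma push_jump_into_args:
  assumes tv: "\<forall>a\<in>#TV. derives a v" and c: "cnt 0 v \<ge> 1"
    and im: "image_mset tty T = judgs_env TV 0" and tu: "\<forall>j\<in>#T. derives j u"
  shows "\<exists>TV'. image_mset tty TV' = image_mset tty TV \<and> judgs_env TV' = rem 0 (judgs_env TV) \<oplus> judgs_env T \<and>
     judgs_size TV' = judgs_size TV + judgs_size T \<and> (\<exists>K. judgs_measure TV' = judgs_C TV + judgs_measure T + K \<and> (\<forall>x\<in>#K. fst x \<le> judgs_size TV + judgs_size T)) \<and>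
     (\<forall>a'\<in>#TV'. derives a' (Sub v u))"
proof (rule push_jump_args[OF _ im tu])
  show "\<forall>a\<in>#TV. \<forall>Ta. image_mset tty Ta = tenv a 0 \<and> (\<forall>j\<in>#Ta. derives j u) \<longrightarrow>
      (\<exists>a'. tty a' = tty a \<and> tenv a' = rem 0 (tenv a) \<oplus> judgs_env Ta \<and> tsz a' = tsz a + judgs_size Ta \<and>
         (\<exists>K. judg_measure a' = tC a + judgs_measure Ta + K \<and> (\<forall>x\<in>#K. fst x \<le> tsz a + judgs_size Ta)) \<and>
         derives a' (Sub v u))"
  proof (intro ballI allI impI)
    fix a Ta assume a: "a \<in># TV" and h: "image_mset tty Ta = tenv a 0 \<and> (\<forall>j\<in>#Ta. derives j u)"
    have ta: "derives a v" using tv a by blast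
    have "tenv a 0 \<noteq> {#}" using typing_occurs[OF ta] c by auto
    then show "\<exists>a'. tty a' = tty a \<and> tenv a' = rem 0 (tenv a) \<oplus> judgs_env Ta \<and> tsz a' = tsz a + judgs_size Ta \<and>
         (\<exists>K. judg_measure a' = tC a + judgs_measure Ta + K \<and> (\<forall>x\<in>#K. fst x \<le> tsz a + judgs_size Ta)) \<and>
         derives a' (Sub v u)"
      using push_jump_arg[OF ta] h by blast
  qed
qed


lemma root_in3: "cnt 0 v \<ge> 1 \<Longrightarrow> typing \<Gamma> (Sub (App (lift 0 t) v) u) \<tau> n C H \<Longrightarrow>
  \<exists>C' H'. typing \<Gamma> (App t (Sub v u)) \<tau> n C' H' \<and> (\<forall>B\<ge>n. C' + close B H' < C + close B H)"
proof -
  assume c: "cnt 0 v \<ge> 1" and "typing \<Gamma> (Sub (App (lift 0 t) v) u) \<tau> n C H"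
  then obtain \<Gamma>1 n1 C1 H1 T where e: "\<Gamma> = rem 0 \<Gamma>1 \<oplus> judgs_env T" "n = n1 + judgs_size T" "C = C1 + judgs_measure T"
    "H = add_mset (size (\<Gamma>1 0)) H1"
    and tt: "typing \<Gamma>1 (App (lift 0 t) v) \<tau> n1 C1 H1"
    and ok: "args_for (\<Gamma>1 0) T" and tu: "\<forall>j\<in>#T. derives j u"
    by (auto elim!: typing_SubE)
  from tt obtain \<Gamma>2 M n2 C2 H2 TV where e2: "\<Gamma>1 = \<Gamma>2 \<oplus> judgs_env TV" "n1 = Suc (n2 + judgs_size TV)"
    "C1 = C2 + close n2 H2 + judgs_measure TV" "H1 = {#}" and t2: "typing \<Gamma>2 (lift 0 t) (Arr M \<tau>) n2 C2 H2"
    and okv: "args_for M TV" and tv: "\<forall>j\<in>#TV. derives j v"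
    by (auto elim!: typing_AppE)
  from typing_unlift[OF t2] have z: "\<Gamma>2 0 = {#}" and t3: "typing (rem 0 \<Gamma>2) t (Arr M \<tau>) n2 C2 H2" by auto
  have "\<forall>j\<in>#TV. tenv j 0 \<noteq> {#}" using tv typing_occurs c by fastforce
  then have "judgs_env TV 0 \<noteq> {#}" using args_for_nonempty[OF okv] judgs_env_nonzero_at by (metis multiset_nonemptyE)
  then have im: "image_mset tty T = judgs_env TV 0" using ok e2 z by (simp add: args_for_def eadd_def)
  from push_jump_into_args[OF tv c im tu] obtain TV' K where d: "image_mset tty TV' = image_mset tty TV"
    "judgs_env TV' = rem 0 (judgs_env TV) \<oplus> judgs_env T" "judgs_size TV' = judgs_size TV + judgs_size T" "judgs_measure TV' = judgs_C TV + judgs_measure T + K"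
    "\<forall>x\<in>#K. fst x \<le> judgs_size TV + judgs_size T" "\<forall>a'\<in>#TV'. derives a' (Sub v u)" by blast
  have okv': "args_for M TV'" using okv args_for_same_image[OF d(1)] by simp
  from typing.tapp[OF t3 okv' d(6)] have X: "typing (rem 0 \<Gamma>2 \<oplus> judgs_env TV') (App t (Sub v u)) \<tau> (Suc (n2 + judgs_size TV')) (C2 + close n2 H2 + judgs_measure TV') {#}" .
  have "rem 0 \<Gamma>2 \<oplus> judgs_env TV' = \<Gamma>" using e e2 d by (simp add: eadd_ac)
  with X e e2 d have Y: "typing \<Gamma> (App t (Sub v u)) \<tau> n (C2 + close n2 H2 + judgs_measure TV') {#}"
    by (simp add: ac_simps)
  have "\<forall>B\<ge>n. (C2 + close n2 H2 + judgs_measure TV') + close B {#} < C + close B H"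
  proof (intro allI impI)
    fix B assume "B \<ge> n"
    then have lt: "\<forall>x\<in>#K. fst x < B" using e e2 d(5) by fastforce
    have "(C2 + close n2 H2 + judgs_C TV + judgs_measure T) + K < (C2 + close n2 H2 + judgs_C TV + judgs_measure T) + (judgs_closed_O TV + {#(B, size (\<Gamma>1 0))#})"
      apply (rule multiset_less_dominated) apply simp
      apply (rule close_lt) using lt by auto
    then show "(C2 + close n2 H2 + judgs_measure TV') + close B {#} < C + close B H"
      using e e2 d by (simp add: ac_simps judgs_measure_split)
  qed
  with Y show ?thesis by blast
qed

lemma rem0_rem1: "rem 0 (rem (Suc 0) \<Gamma>) = rem 0 (rem 0 \<Gamma>)" by (auto simp: rem_def fun_eq_iff)

lemma root_in4: "cnt 0 v \<ge> 1 \<Longrightarrow> typing \<Gamma> (Sub (Sub (lift 1 t) v) u) \<tau> n C H \<Longrightarrow>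
  \<exists>C' H'. typing \<Gamma> (Sub t (Sub v u)) \<tau> n C' H' \<and> (\<forall>B\<ge>n. C' + close B H' < C + close B H)"
proof -
  assume c: "cnt 0 v \<ge> 1" and tt0: "typing \<Gamma> (Sub (Sub (lift 1 t) v) u) \<tau> n C H"
  from tt0 obtain \<Gamma>1 n1 C1 H1 T where e: "\<Gamma> = rem 0 \<Gamma>1 \<oplus> judgs_env T" "n = n1 + judgs_size T" "C = C1 + judgs_measure T"
    "H = add_mset (size (\<Gamma>1 0)) H1"
    and tt: "typing \<Gamma>1 (Sub (lift 1 t) v) \<tau> n1 C1 H1"
    and ok: "args_for (\<Gamma>1 0) T" and tu: "\<forall>j\<in>#T. derives j u"
    by (rule typing_SubE) blast
  from tt obtain \<Gamma>2 n2 C2 H2 TV where e2: "\<Gamma>1 = rem 0 \<Gamma>2 \<oplus> judgs_env TV" "n1 = n2 + judgs_size TV" "C1 = C2 + judgs_measure TV"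
    "H1 = add_mset (size (\<Gamma>2 0)) H2"
    and t2: "typing \<Gamma>2 (lift 1 t) \<tau> n2 C2 H2"
    and okv: "args_for (\<Gamma>2 0) TV" and tv: "\<forall>j\<in>#TV. derives j v"
    by (auto elim!: typing_SubE)
  from typing_unlift[OF t2] have z: "\<Gamma>2 1 = {#}" and t3: "typing (rem 1 \<Gamma>2) t \<tau> n2 C2 H2" by auto
  have "\<forall>j\<in>#TV. tenv j 0 \<noteq> {#}" using tv typing_occurs c by fastforce
  then have "judgs_env TV 0 \<noteq> {#}" using args_for_nonempty[OF okv] judgs_env_nonzero_at by (metis multiset_nonemptyE)
  then have im: "image_mset tty T = judgs_env TV 0" using ok e2 z by (simp add: args_for_def eadd_def rem_def)
  from push_jump_into_args[OF tv c im tu] obtain TV' K where d: "image_mset tty TV' = image_mset tty TV"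
    "judgs_env TV' = rem 0 (judgs_env TV) \<oplus> judgs_env T" "judgs_size TV' = judgs_size TV + judgs_size T" "judgs_measure TV' = judgs_C TV + judgs_measure T + K"
    "\<forall>x\<in>#K. fst x \<le> judgs_size TV + judgs_size T" "\<forall>a'\<in>#TV'. derives a' (Sub v u)" by blast
  have okv': "args_for (rem 1 \<Gamma>2 0) TV'" using okv args_for_same_image[OF d(1)] by (simp add: rem_def)
  from typing.tsub[OF t3 okv' d(6)] have X: "typing (rem 0 (rem 1 \<Gamma>2) \<oplus> judgs_env TV') (Sub t (Sub v u)) \<tau> (n2 + judgs_size TV') (C2 + judgs_measure TV') (add_mset (size (\<Gamma>2 0)) H2)"
    by (simp add: rem_def)
  have "rem 0 (rem 1 \<Gamma>2) \<oplus> judgs_env TV' = \<Gamma>" using e e2 d by (simp add: eadd_ac rem0_rem1)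
  with X e e2 d have Y: "typing \<Gamma> (Sub t (Sub v u)) \<tau> n (C2 + judgs_measure TV') (add_mset (size (\<Gamma>2 0)) H2)"
    by (simp add: ac_simps)
  have "\<forall>B\<ge>n. (C2 + judgs_measure TV') + close B (add_mset (size (\<Gamma>2 0)) H2) < C + close B H"
  proof (intro allI impI)
    fix B assume "B \<ge> n"
    moreover have "n2 > 0" using typing_pos[OF t2] .
    ultimately have lt: "\<forall>x\<in>#K. fst x < B" using e e2 d(5) by fastforce
    have "(C2 + judgs_C TV + judgs_measure T + close B H2 + {#(B, size (\<Gamma>2 0))#}) + K < (C2 + judgs_C TV + judgs_measure T + close B H2 + {#(B, size (\<Gamma>2 0))#}) + (judgs_closed_O TV + {#(B, size (\<Gamma>1 0))#})"
      apply (rule multiset_less_dominated) apply simp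
      apply (rule close_lt) using lt by auto
    then show "(C2 + judgs_measure TV') + close B (add_mset (size (\<Gamma>2 0)) H2) < C + close B H"
      using e e2 d by (simp add: ac_simps judgs_measure_split)
  qed
  with Y show ?thesis by blast
qed

lemma cs_root_typing: "typing \<Gamma> (Sub (Sub t (lift 0 s)) v) \<tau> n C H \<Longrightarrow> typing \<Gamma> (Sub (Sub (swap 0 t) (lift 0 v)) s) \<tau> n C H"
proof -
  assume tt0: "typing \<Gamma> (Sub (Sub t (lift 0 s)) v) \<tau> n C H"
  from tt0 obtain \<Gamma>1 n1 C1 H1 T where e: "\<Gamma> = rem 0 \<Gamma>1 \<oplus> judgs_env T" "n = n1 + judgs_size T" "C = C1 + judgs_measure T"
    "H = add_mset (size (\<Gamma>1 0)) H1"
    and tt: "typing \<Gamma>1 (Sub t (lift 0 s)) \<tau> n1 C1 H1"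
    and ok: "args_for (\<Gamma>1 0) T" and tu: "\<forall>j\<in>#T. derives j v"
    by (rule typing_SubE) blast
  from tt obtain \<Gamma>2 n2 C2 H2 TS where e2: "\<Gamma>1 = rem 0 \<Gamma>2 \<oplus> judgs_env TS" "n1 = n2 + judgs_size TS" "C1 = C2 + judgs_measure TS"
    "H1 = add_mset (size (\<Gamma>2 0)) H2"
    and t2: "typing \<Gamma>2 t \<tau> n2 C2 H2"
    and oks: "args_for (\<Gamma>2 0) TS" and ts: "\<forall>j\<in>#TS. derives j (lift 0 s)"
    by (rule typing_SubE) blast
  have ts': "\<forall>j\<in>#TS. tenv j 0 = {#} \<and> typing (rem 0 (tenv j)) s (tty j) (tsz j) (tC j) (tO j)"
    using ts typing_unlift by blast
  then have z: "judgs_env TS 0 = {#}" by (intro judgs_env_zero_at) auto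
  have g10: "\<Gamma>1 0 = \<Gamma>2 1" using e2 z by (simp add: eadd_def rem_def)
  from typing_swap[OF t2, of 0] have t3: "typing (sw 0 \<Gamma>2) (swap 0 t) \<tau> n2 C2 H2" .
  let ?T = "image_mset (mapenv (ins 0)) T"
  let ?TS = "image_mset (mapenv (rem 0)) TS"
  have ok1: "args_for (sw 0 \<Gamma>2 0) ?T" using ok g10 by (simp add: mapenv_props sw_def)
  have tu1: "\<forall>j\<in>#?T. derives j (lift 0 v)" using tu typing_lift by auto
  from typing.tsub[OF t3 ok1 tu1] have i: "typing (rem 0 (sw 0 \<Gamma>2) \<oplus> ins 0 (judgs_env T)) (Sub (swap 0 t) (lift 0 v)) \<tau>
     (n2 + judgs_size T) (C2 + judgs_measure T) (add_mset (size (\<Gamma>1 0)) H2)"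
    using g10 by (simp add: mapenv_props sw_def)
  have ok2: "args_for ((rem 0 (sw 0 \<Gamma>2) \<oplus> ins 0 (judgs_env T)) 0) ?TS" using oks by (simp add: mapenv_props sw_def rem_def eadd_def)
  have tu2: "\<forall>j\<in>#?TS. derives j s" using ts' by auto
  from typing.tsub[OF i ok2 tu2] have X: "typing (rem 0 (rem 0 (sw 0 \<Gamma>2) \<oplus> ins 0 (judgs_env T)) \<oplus> rem 0 (judgs_env TS)) (Sub (Sub (swap 0 t) (lift 0 v)) s) \<tau>
     (n2 + judgs_size T + judgs_size TS) (C2 + judgs_measure T + judgs_measure TS) (add_mset (size (\<Gamma>2 0)) (add_mset (size (\<Gamma>1 0)) H2))"
    by (simp add: mapenv_props sw_def rem_def eadd_def)
  have "rem 0 (rem 0 (sw 0 \<Gamma>2) \<oplus> ins 0 (judgs_env T)) \<oplus> rem 0 (judgs_env TS) = \<Gamma>"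
    using e e2 by (auto simp: rem_def sw_def eadd_def ins_def fun_eq_iff)
  with X e e2 show ?thesis by (simp add: ac_simps add_mset_commute)
qed

lemma swap_swap[simp]: "swap k (swap k t) = t"
  by (induction t arbitrary: k) auto

lemma cs_root_sym: "cs_root a b \<Longrightarrow> cs_root b a"
proof (induction rule: cs_root.induct)
  case (1 t s v)
  from cs_root.intros[of "swap 0 t" v s] show ?case by simp
qed

lemma jumps_snoc: "jumps a (L @ [v]) = Sub (jumps a L) v"
  by (induction L arbitrary: a) auto

lemma sub_shrink:
  assumes t': "typing \<Gamma>' t' \<tau> n' C' H'" and le: "env_sub \<Gamma>' \<Gamma>1" and ok: "args_for (\<Gamma>1 0) T"
    and tu: "\<forall>j\<in>#T. derives j u"
  shows "\<exists>T' C'' H''. T' \<subseteq># T \<and> typing (rem 0 \<Gamma>' \<oplus> judgs_env T') (Sub t' u) \<tau> (n' + judgs_size T') C'' H''"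
proof -
  have "\<Gamma>' 0 \<subseteq># \<Gamma>1 0" using le by (simp add: env_sub_def)
  from args_shrink[OF ok this] obtain T' where T': "T' \<subseteq># T" "args_for (\<Gamma>' 0) T'" by blast
  have "\<forall>j\<in>#T'. derives j u" using tu T'(1) by (meson mset_subset_eqD)
  from typing.tsub[OF t' T'(2) this] T'(1) show ?thesis by blast
qed

lemma root_dB: "typing \<Gamma> (App (jumps (Lam t) L) u) \<tau> n C H \<Longrightarrow>
   \<exists>\<Gamma>' n' C' H'. typing \<Gamma>' (jumps (Sub t ((lift 0 ^^ length L) u)) L) \<tau> n' C' H' \<and> n' < n \<and> env_sub \<Gamma>' \<Gamma>"
proof (induction L arbitrary: \<Gamma> \<tau> n C H u rule: rev_induct)
  case Nil
  from Nil obtain \<Gamma>1 M n1 C1 H1 T where e: "\<Gamma> = \<Gamma>1 \<oplus> judgs_env T" "n = Suc (n1 + judgs_size T)"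
    and t1: "typing \<Gamma>1 (Lam t) (Arr M \<tau>) n1 C1 H1"
    and ok: "args_for M T" and tu: "\<forall>j\<in>#T. derives j u"
    by (auto elim!: typing_AppE)
  from t1 obtain \<Gamma>2 W n2 C2 H2 where e2: "\<Gamma>1 = rem 0 \<Gamma>2" "M = \<Gamma>2 0 + W" "n1 = Suc n2"
    and t2: "typing \<Gamma>2 t \<tau> n2 C2 H2" by (auto elim!: typing_LamE)
  from args_shrink[OF ok, of "\<Gamma>2 0"] e2 obtain T' where T': "T' \<subseteq># T" "args_for (\<Gamma>2 0) T'" by auto
  have "\<forall>j\<in>#T'. derives j u" using tu T'(1) by (meson mset_subset_eqD)
  from typing.tsub[OF t2 T'(2) this] have X: "typing (rem 0 \<Gamma>2 \<oplus> judgs_env T') (Sub t u) \<tau> (n2 + judgs_size T') (C2 + judgs_measure T') (add_mset (size (\<Gamma>2 0)) H2)" .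
  have "n2 + judgs_size T' < n" using e e2 judgs_size_mono[OF T'(1)] by simp
  moreover have "env_sub (rem 0 \<Gamma>2 \<oplus> judgs_env T') \<Gamma>" using e e2 judgs_env_mono[OF T'(1)] by (simp add: env_sub_eadd)
  ultimately show ?case using X by auto
next
  case (snoc v L)
  from snoc.prems have "typing \<Gamma> (App (Sub (jumps (Lam t) L) v) u) \<tau> n C H" by (simp add: jumps_snoc)
  then obtain \<Gamma>1 M n1 C1 H1 T where e: "\<Gamma> = \<Gamma>1 \<oplus> judgs_env T" "n = Suc (n1 + judgs_size T)"
    and t1: "typing \<Gamma>1 (Sub (jumps (Lam t) L) v) (Arr M \<tau>) n1 C1 H1"
    and ok: "args_for M T" and tu: "\<forall>j\<in>#T. derives j u"
    by (auto elim!: typing_AppE)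
  from t1 obtain \<Gamma>2 n2 C2 H2 TV where e2: "\<Gamma>1 = rem 0 \<Gamma>2 \<oplus> judgs_env TV" "n1 = n2 + judgs_size TV"
    and t2: "typing \<Gamma>2 (jumps (Lam t) L) (Arr M \<tau>) n2 C2 H2"
    and okv: "args_for (\<Gamma>2 0) TV" and tv: "\<forall>j\<in>#TV. derives j v"
    by (rule typing_SubE) blast
  let ?T = "image_mset (mapenv (ins 0)) T"
  have ok1: "args_for M ?T" using ok by (simp add: mapenv_props)
  have tu1: "\<forall>j\<in>#?T. derives j (lift 0 u)" using tu typing_lift by auto
  from typing.tapp[OF t2 ok1 tu1] have a: "typing (\<Gamma>2 \<oplus> ins 0 (judgs_env T)) (App (jumps (Lam t) L) (lift 0 u)) \<tau>
     (Suc (n2 + judgs_size T)) (C2 + close n2 H2 + judgs_measure ?T) {#}" by (simp add: mapenv_props)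
  from snoc.IH[OF a] obtain \<Gamma>3 n3 C3 H3 where
    b: "typing \<Gamma>3 (jumps (Sub t ((lift 0 ^^ length L) (lift 0 u))) L) \<tau> n3 C3 H3" "n3 < Suc (n2 + judgs_size T)"
       "env_sub \<Gamma>3 (\<Gamma>2 \<oplus> ins 0 (judgs_env T))" by blast
  from sub_shrink[OF b(1) b(3) _ tv] okv obtain TV' C4 H4 where
    c: "TV' \<subseteq># TV" "typing (rem 0 \<Gamma>3 \<oplus> judgs_env TV') (Sub (jumps (Sub t ((lift 0 ^^ length L) (lift 0 u))) L) v) \<tau> (n3 + judgs_size TV') C4 H4"
    by (auto simp: eadd_def)
  have "(lift 0 ^^ length (L @ [v])) u = (lift 0 ^^ length L) (lift 0 u)" by (simp only: length_append_singleton funpow_Suc_right comp_def)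
  then have "jumps (Sub t ((lift 0 ^^ length (L @ [v])) u)) (L @ [v]) = Sub (jumps (Sub t ((lift 0 ^^ length L) (lift 0 u))) L) v"
    by (simp add: jumps_snoc)
  moreover have "n3 + judgs_size TV' < n" using b(2) e e2 judgs_size_mono[OF c(1)] by simp
  moreover have "env_sub (rem 0 \<Gamma>3 \<oplus> judgs_env TV') \<Gamma>"
  proof -
    have "env_sub (rem 0 \<Gamma>3) (rem 0 (\<Gamma>2 \<oplus> ins 0 (judgs_env T)))" using b(3) by (rule env_sub_rem)
    then have "env_sub (rem 0 \<Gamma>3 \<oplus> judgs_env TV') (rem 0 (\<Gamma>2 \<oplus> ins 0 (judgs_env T)) \<oplus> judgs_env TV)"
      using judgs_env_mono[OF c(1)] by (rule env_sub_eadd)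
    moreover have "rem 0 (\<Gamma>2 \<oplus> ins 0 (judgs_env T)) \<oplus> judgs_env TV = \<Gamma>" using e e2 by (simp add: eadd_ac)
    ultimately show ?thesis by simp
  qed
  ultimately show ?case using c(2) by auto
qed

lemma root_typed_decrease: "root_jin t u \<Longrightarrow> typed_decrease t u"
  unfolding typed_decrease_def
proof (induction rule: root_jin.induct)
  case (dB t L u)
  show ?case using root_dB[OF dB] unfolding decreases_def by blast
next
  case (w t u)
  show ?case using root_w[OF w] unfolding decreases_def by blast
next
  case (d t u)
  show ?case using root_d[OF d] unfolding decreases_def by (meson env_sub_refl)
next
  case (c t s u)
  show ?case using root_c[OF c] unfolding decreases_def by blast
next
  case (in1 t u)
  show ?case using root_in1[OF in1] unfolding decreases_def by blast
next
  case (in2 t v u)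
  show ?case using root_in2[OF in2] unfolding decreases_def by blast
next
  case (in3 v t u)
  show ?case using root_in3[OF in3] unfolding decreases_def by blast
next
  case (in4 v t u)
  show ?case using root_in4[OF in4] unfolding decreases_def by blast
qed

definition judg_decreases :: "judg \<Rightarrow> judg \<Rightarrow> bool" where
  "judg_decreases j j' \<longleftrightarrow> tty j' = tty j \<and> ((tsz j' < tsz j \<and> env_sub (tenv j') (tenv j)) \<or> (tsz j' = tsz j \<and> tenv j' = tenv j \<and> judg_measure j' < judg_measure j))"

lemma judgs_decrease:
  assumes "T \<noteq> {#}" and "\<forall>j\<in>#T. \<exists>j'. judg_decreases j j' \<and> P j'"
  shows "\<exists>T'. image_mset tty T' = image_mset tty T \<and> (\<forall>j'\<in>#T'. P j') \<and>
    ((judgs_size T' < judgs_size T \<and> env_sub (judgs_env T') (judgs_env T)) \<or> (judgs_size T' = judgs_size T \<and> judgs_env T' = judgs_env T \<and> judgs_measure T' < judgs_measure T))"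
  using assms
proof (induction T)
  case empty then show ?case by simp
next
  case (add j T)
  from add.prems obtain j' where j': "judg_decreases j j'" "P j'" by auto
  show ?case
  proof (cases "T = {#}")
    case True
    then show ?thesis using j' by (intro exI[where x="{#j'#}"]) (auto simp: judg_decreases_def)
  next
    case False
    with add obtain T' where h: "image_mset tty T' = image_mset tty T" "\<forall>j'\<in>#T'. P j'"
      "(judgs_size T' < judgs_size T \<and> env_sub (judgs_env T') (judgs_env T)) \<or> (judgs_size T' = judgs_size T \<and> judgs_env T' = judgs_env T \<and> judgs_measure T' < judgs_measure T)" by auto
    have "image_mset tty (add_mset j' T') = image_mset tty (add_mset j T) \<and> (\<forall>x\<in>#add_mset j' T'. P x) \<and>
    ((judgs_size (add_mset j' T') < judgs_size (add_mset j T) \<and> env_sub (judgs_env (add_mset j' T')) (judgs_env (add_mset j T))) \<or>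
     (judgs_size (add_mset j' T') = judgs_size (add_mset j T) \<and> judgs_env (add_mset j' T') = judgs_env (add_mset j T) \<and> judgs_measure (add_mset j' T') < judgs_measure (add_mset j T)))"
      using j' h unfolding judg_decreases_def
      by (auto intro: env_sub_eadd union_less_mono union_le_mono1 union_le_mono2)
    then show ?thesis by blast
  qed
qed

lemma args_decrease:
  assumes IH: "typed_decrease t u" and ok: "args_for M T" and tu: "\<forall>j\<in>#T. derives j t"
  shows "\<exists>T'. image_mset tty T' = image_mset tty T \<and> (\<forall>j'\<in>#T'. derives j' u) \<and>
    ((judgs_size T' < judgs_size T \<and> env_sub (judgs_env T') (judgs_env T)) \<or>
     (judgs_size T' = judgs_size T \<and> judgs_env T' = judgs_env T \<and> judgs_measure T' < judgs_measure T))"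
proof -
  have "\<forall>j\<in>#T. \<exists>j'. judg_decreases j j' \<and> derives j' u"
  proof
    fix j assume "j \<in># T"
    with tu IH obtain \<Gamma>' n' C' H' where h: "typing \<Gamma>' u (tty j) n' C' H'" "decreases (tenv j) (tsz j) (tC j) (tO j) \<Gamma>' n' C' H'"
      unfolding typed_decrease_def by blast
    then show "\<exists>j'. judg_decreases j j' \<and> derives j' u"
      by (intro exI[where x="Judg \<Gamma>' (tty j) n' C' H'"]) (auto simp: judg_decreases_def decreases_def judg_measure_def)
  qed
  from judgs_decrease[OF args_for_nonempty[OF ok] this] show ?thesis by blast
qed

lemma typed_decrease_lam:
  assumes IH: "typed_decrease t u" and "typing \<Gamma> (Lam t) \<tau> n C H"
  shows "\<exists>\<Gamma>' n' C' H'. typing \<Gamma>' (Lam u) \<tau> n' C' H' \<and> decreases \<Gamma> n C H \<Gamma>' n' C' H'"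
proof -
  from assms(2) obtain \<Gamma>1 \<tau>' W n1 C1 H1 where e: "\<Gamma> = rem 0 \<Gamma>1" "\<tau> = Arr (\<Gamma>1 0 + W) \<tau>'" "n = Suc n1"
     "C = C1 + close n1 H1" "H = {#}" and tt: "typing \<Gamma>1 t \<tau>' n1 C1 H1"
    by (auto elim!: typing_LamE)
  from IH tt obtain \<Gamma>1' n1' C1' H1' where h: "typing \<Gamma>1' u \<tau>' n1' C1' H1'" "decreases \<Gamma>1 n1 C1 H1 \<Gamma>1' n1' C1' H1'" unfolding typed_decrease_def by blast
  from h(2) show ?thesis unfolding decreases_def
  proof (elim disjE conjE)
    assume a: "n1' < n1" "env_sub \<Gamma>1' \<Gamma>1"
    then have sub: "\<Gamma>1' 0 \<subseteq># \<Gamma>1 0" by (simp add: env_sub_def)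
    have eq: "\<Gamma>1' 0 + (W + (\<Gamma>1 0 - \<Gamma>1' 0)) = \<Gamma>1 0 + W"
      using sub by (metis add.assoc add.commute subset_mset.add_diff_inverse)
    from typing.tlam[OF h(1), of "W + (\<Gamma>1 0 - \<Gamma>1' 0)"] have "typing (rem 0 \<Gamma>1') (Lam u) \<tau> (Suc n1') (C1' + close n1' H1') {#}"
      using e eq by simp
    moreover have "env_sub (rem 0 \<Gamma>1') \<Gamma>" using a e env_sub_rem by blast
    ultimately show "\<exists>\<Gamma>' n' C' H'. typing \<Gamma>' (Lam u) \<tau> n' C' H' \<and> (n' < n \<and> env_sub \<Gamma>' \<Gamma> \<or> n' = n \<and> \<Gamma>' = \<Gamma> \<and> (\<forall>B\<ge>n. C' + close B H' < C + close B H))"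
      using a e by (intro exI conjI) auto
  next
    assume a: "n1' = n1" "\<Gamma>1' = \<Gamma>1" "\<forall>B\<ge>n1. C1' + close B H1' < C1 + close B H1"
    from typing.tlam[OF h(1), of W] have "typing \<Gamma> (Lam u) \<tau> n (C1' + close n1 H1') {#}" using a e by simp
    moreover have "\<forall>B\<ge>n. C1' + close n1 H1' + close B {#} < C + close B H" using a e by simp
    ultimately show "\<exists>\<Gamma>' n' C' H'. typing \<Gamma>' (Lam u) \<tau> n' C' H' \<and> (n' < n \<and> env_sub \<Gamma>' \<Gamma> \<or> n' = n \<and> \<Gamma>' = \<Gamma> \<and> (\<forall>B\<ge>n. C' + close B H' < C + close B H))"
      by blast
  qed
qed

lemma typed_decrease_appl:
  assumes IH: "typed_decrease t u" and "typing \<Gamma> (App t v) \<tau> n C H"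
  shows "\<exists>\<Gamma>' n' C' H'. typing \<Gamma>' (App u v) \<tau> n' C' H' \<and> decreases \<Gamma> n C H \<Gamma>' n' C' H'"
proof -
  from assms(2) obtain \<Gamma>1 M n1 C1 H1 T where e: "\<Gamma> = \<Gamma>1 \<oplus> judgs_env T" "n = Suc (n1 + judgs_size T)"
    "C = C1 + close n1 H1 + judgs_measure T" "H = {#}" and tt: "typing \<Gamma>1 t (Arr M \<tau>) n1 C1 H1"
    and ok: "args_for M T" and tu: "\<forall>j\<in>#T. derives j v"
    by (auto elim!: typing_AppE)
  from IH tt obtain \<Gamma>1' n1' C1' H1' where h: "typing \<Gamma>1' u (Arr M \<tau>) n1' C1' H1'" "decreases \<Gamma>1 n1 C1 H1 \<Gamma>1' n1' C1' H1'"
    unfolding typed_decrease_def by blast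
  from typing.tapp[OF h(1) ok tu] have X: "typing (\<Gamma>1' \<oplus> judgs_env T) (App u v) \<tau> (Suc (n1' + judgs_size T)) (C1' + close n1' H1' + judgs_measure T) {#}" .
  have "decreases \<Gamma> n C H (\<Gamma>1' \<oplus> judgs_env T) (Suc (n1' + judgs_size T)) (C1' + close n1' H1' + judgs_measure T) {#}"
    using h(2) e unfolding decreases_def by (auto intro: env_sub_eadd union_le_mono1)
  with X show ?thesis by blast
qed

lemma typed_decrease_appr:
  assumes IH: "typed_decrease t u" and "typing \<Gamma> (App v t) \<tau> n C H"
  shows "\<exists>\<Gamma>' n' C' H'. typing \<Gamma>' (App v u) \<tau> n' C' H' \<and> decreases \<Gamma> n C H \<Gamma>' n' C' H'"
proof -
  from assms(2) obtain \<Gamma>1 M n1 C1 H1 T where e: "\<Gamma> = \<Gamma>1 \<oplus> judgs_env T" "n = Suc (n1 + judgs_size T)"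
    "C = C1 + close n1 H1 + judgs_measure T" "H = {#}" and tt: "typing \<Gamma>1 v (Arr M \<tau>) n1 C1 H1"
    and ok: "args_for M T" and tu: "\<forall>j\<in>#T. derives j t"
    by (auto elim!: typing_AppE)
  from args_decrease[OF IH ok tu] obtain T' where h: "image_mset tty T' = image_mset tty T"
    "\<forall>j'\<in>#T'. derives j' u"
    "(judgs_size T' < judgs_size T \<and> env_sub (judgs_env T') (judgs_env T)) \<or>
     (judgs_size T' = judgs_size T \<and> judgs_env T' = judgs_env T \<and> judgs_measure T' < judgs_measure T)" by blast
  have ok': "args_for M T'" using ok args_for_same_image[OF h(1)] by simp
  from typing.tapp[OF tt ok' h(2)] have X: "typing (\<Gamma>1 \<oplus> judgs_env T') (App v u) \<tau> (Suc (n1 + judgs_size T')) (C1 + close n1 H1 + judgs_measure T') {#}" .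
  have "decreases \<Gamma> n C H (\<Gamma>1 \<oplus> judgs_env T') (Suc (n1 + judgs_size T')) (C1 + close n1 H1 + judgs_measure T') {#}"
    using h(3) e unfolding decreases_def by (auto intro: env_sub_eadd union_le_mono2)
  with X show ?thesis by blast
qed

lemma typed_decrease_subl:
  assumes IH: "typed_decrease t u" and "typing \<Gamma> (Sub t v) \<tau> n C H"
  shows "\<exists>\<Gamma>' n' C' H'. typing \<Gamma>' (Sub u v) \<tau> n' C' H' \<and> decreases \<Gamma> n C H \<Gamma>' n' C' H'"
proof -
  from assms(2) obtain \<Gamma>1 n1 C1 H1 T where e: "\<Gamma> = rem 0 \<Gamma>1 \<oplus> judgs_env T" "n = n1 + judgs_size T" "C = C1 + judgs_measure T"
    "H = add_mset (size (\<Gamma>1 0)) H1"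
    and tt: "typing \<Gamma>1 t \<tau> n1 C1 H1"
    and ok: "args_for (\<Gamma>1 0) T" and tu: "\<forall>j\<in>#T. derives j v"
    by (auto elim!: typing_SubE)
  from IH tt obtain \<Gamma>1' n1' C1' H1' where h: "typing \<Gamma>1' u \<tau> n1' C1' H1'" "decreases \<Gamma>1 n1 C1 H1 \<Gamma>1' n1' C1' H1'"
    unfolding typed_decrease_def by blast
  from h(2) show ?thesis unfolding decreases_def
  proof (elim disjE conjE)
    assume a: "n1' < n1" "env_sub \<Gamma>1' \<Gamma>1"
    from sub_shrink[OF h(1) a(2) ok tu] obtain T' C'' H'' where
      b: "T' \<subseteq># T" "typing (rem 0 \<Gamma>1' \<oplus> judgs_env T') (Sub u v) \<tau> (n1' + judgs_size T') C'' H''" by blast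
    have "n1' + judgs_size T' < n" using a e judgs_size_mono[OF b(1)] by simp
    moreover have "env_sub (rem 0 \<Gamma>1' \<oplus> judgs_env T') \<Gamma>" using e env_sub_eadd[OF env_sub_rem[OF a(2)] judgs_env_mono[OF b(1)]] by simp
    ultimately show "\<exists>\<Gamma>' n' C' H'. typing \<Gamma>' (Sub u v) \<tau> n' C' H' \<and> (n' < n \<and> env_sub \<Gamma>' \<Gamma> \<or> n' = n \<and> \<Gamma>' = \<Gamma> \<and> (\<forall>B\<ge>n. C' + close B H' < C + close B H))"
      using b(2) by blast
  next
    assume a: "n1' = n1" "\<Gamma>1' = \<Gamma>1" "\<forall>B\<ge>n1. C1' + close B H1' < C1 + close B H1"
    from typing.tsub[OF h(1)] ok tu a have "typing \<Gamma> (Sub u v) \<tau> n (C1' + judgs_measure T) (add_mset (size (\<Gamma>1 0)) H1')" using e by simp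
    moreover have "\<forall>B\<ge>n. C1' + judgs_measure T + close B (add_mset (size (\<Gamma>1 0)) H1') < C + close B H"
    proof (intro allI impI)
      fix B assume "B \<ge> n"
      then have "C1' + close B H1' < C1 + close B H1" using a e by simp
      then have "(C1' + close B H1') + (judgs_measure T + {#(B, size (\<Gamma>1 0))#}) < (C1 + close B H1) + (judgs_measure T + {#(B, size (\<Gamma>1 0))#})"
        by (rule union_le_mono1)
      then show "C1' + judgs_measure T + close B (add_mset (size (\<Gamma>1 0)) H1') < C + close B H" using e by (simp add: ac_simps)
    qed
    ultimately show "\<exists>\<Gamma>' n' C' H'. typing \<Gamma>' (Sub u v) \<tau> n' C' H' \<and> (n' < n \<and> env_sub \<Gamma>' \<Gamma> \<or> n' = n \<and> \<Gamma>' = \<Gamma> \<and> (\<forall>B\<ge>n. C' + close B H' < C + close B H))"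
      by blast
  qed
qed

lemma typed_decrease_subr:
  assumes IH: "typed_decrease t u" and "typing \<Gamma> (Sub v t) \<tau> n C H"
  shows "\<exists>\<Gamma>' n' C' H'. typing \<Gamma>' (Sub v u) \<tau> n' C' H' \<and> decreases \<Gamma> n C H \<Gamma>' n' C' H'"
proof -
  from assms(2) obtain \<Gamma>1 n1 C1 H1 T where e: "\<Gamma> = rem 0 \<Gamma>1 \<oplus> judgs_env T" "n = n1 + judgs_size T" "C = C1 + judgs_measure T"
    "H = add_mset (size (\<Gamma>1 0)) H1"
    and tt: "typing \<Gamma>1 v \<tau> n1 C1 H1"
    and ok: "args_for (\<Gamma>1 0) T" and tu: "\<forall>j\<in>#T. derives j t"
    by (auto elim!: typing_SubE)
  from args_decrease[OF IH ok tu] obtain T' where h: "image_mset tty T' = image_mset tty T"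
    "\<forall>j'\<in>#T'. derives j' u"
    "(judgs_size T' < judgs_size T \<and> env_sub (judgs_env T') (judgs_env T)) \<or>
     (judgs_size T' = judgs_size T \<and> judgs_env T' = judgs_env T \<and> judgs_measure T' < judgs_measure T)" by blast
  have ok': "args_for (\<Gamma>1 0) T'" using ok args_for_same_image[OF h(1)] by simp
  from typing.tsub[OF tt ok' h(2)] have X: "typing (rem 0 \<Gamma>1 \<oplus> judgs_env T') (Sub v u) \<tau> (n1 + judgs_size T') (C1 + judgs_measure T') (add_mset (size (\<Gamma>1 0)) H1)" .
  have "decreases \<Gamma> n C H (rem 0 \<Gamma>1 \<oplus> judgs_env T') (n1 + judgs_size T') (C1 + judgs_measure T') (add_mset (size (\<Gamma>1 0)) H1)"
    using h(3) e unfolding decreases_def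
    by (auto intro: env_sub_eadd simp: add.assoc[symmetric] intro!: union_le_mono1 union_le_mono2)
  with X show ?thesis by blast
qed

lemma ctx_typed_decrease: "ctx root_jin t u \<Longrightarrow> typed_decrease t u"
proof (induction rule: ctx.induct)
  case (root t u)
  then show ?case by (rule root_typed_decrease)
next
  case (lam t u)
  then show ?case using typed_decrease_lam unfolding typed_decrease_def by blast
next
  case (appl t u v)
  then show ?case using typed_decrease_appl unfolding typed_decrease_def by blast
next
  case (appr t u v)
  then show ?case using typed_decrease_appr unfolding typed_decrease_def by blast
next
  case (subl t u v)
  then show ?case using typed_decrease_subl unfolding typed_decrease_def by blast
next
  case (subr t u v)
  then show ?case using typed_decrease_subr unfolding typed_decrease_def by blast
qed

lemma ctx_cs_typing: "ctx cs_root t t' \<Longrightarrow> typing \<Gamma> t \<tau> n C H \<Longrightarrow> typing \<Gamma> t' \<tau> n C H"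
proof (induction arbitrary: \<Gamma> \<tau> n C H rule: ctx.induct)
  case (root t u)
  then show ?case by (auto elim!: cs_root.cases intro: cs_root_typing)
next
  case (lam t u)
  then show ?case by (auto elim!: typing_LamE intro!: typing.tlam)
next
  case (appl t u v)
  then show ?case by (auto elim!: typing_AppE intro!: typing.tapp)
next
  case (appr t u v)
  from appr.prems show ?case
  proof (rule typing_AppE)
    fix \<Gamma>1 M n1 C1 H1 T assume e: "\<Gamma> = \<Gamma>1 \<oplus> judgs_env T" "n = Suc (n1 + judgs_size T)" "C = C1 + close n1 H1 + judgs_measure T" "H = {#}"
      and tt: "typing \<Gamma>1 v (Arr M \<tau>) n1 C1 H1" and ok: "args_for M T" and tu: "\<forall>j\<in>#T. derives j t"
    have "\<forall>j\<in>#T. derives j u" using tu appr.IH by blast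
    from typing.tapp[OF tt ok this] e show ?thesis by simp
  qed
next
  case (subl t u v)
  then show ?case by (auto elim!: typing_SubE intro!: typing.tsub)
next
  case (subr t u v)
  from subr.prems show ?case
  proof (rule typing_SubE)
    fix \<Gamma>1 n1 C1 H1 T assume e: "\<Gamma> = rem 0 \<Gamma>1 \<oplus> judgs_env T" "n = n1 + judgs_size T" "C = C1 + judgs_measure T" "H = add_mset (size (\<Gamma>1 0)) H1"
      and tt: "typing \<Gamma>1 v \<tau> n1 C1 H1" and ok: "args_for (\<Gamma>1 0) T" and tu: "\<forall>j\<in>#T. derives j t"
    have "\<forall>j\<in>#T. derives j u" using tu subr.IH by blast
    from typing.tsub[OF tt ok this] e show ?thesis by simp
  qed
qed

lemma ctx_cs_sym: "ctx cs_root t t' \<Longrightarrow> ctx cs_root t' t"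
  by (induction rule: ctx.induct) (auto intro: ctx.intros cs_root_sym)

lemma cs_eq_typing: "cs_eq t t' \<Longrightarrow> typing \<Gamma> t \<tau> n C H \<Longrightarrow> typing \<Gamma> t' \<tau> n C H"
proof -
  assume "cs_eq t t'" "typing \<Gamma> t \<tau> n C H"
  then have "(symclp (ctx cs_root))\<^sup>*\<^sup>* t t'" by (simp add: cs_eq_def equivclp_def)
  then show ?thesis using \<open>typing \<Gamma> t \<tau> n C H\<close>
  proof (induction rule: rtranclp_induct)
    case base then show ?case .
  next
    case (step y z)
    from step(2) have "ctx cs_root y z" by (auto elim: symclpE intro: ctx_cs_sym)
    then show ?case using step ctx_cs_typing by blast
  qed
qed

lemma jin_decreases: "jin t t' \<Longrightarrow> typing \<Gamma> t \<tau> n C H \<Longrightarrow>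
   \<exists>\<Gamma>' n' C' H'. typing \<Gamma>' t' \<tau> n' C' H' \<and> (n' < n \<or> (n' = n \<and> C' + close n H' < C + close n H))"
proof -
  assume "jin t t'" "typing \<Gamma> t \<tau> n C H"
  then obtain a b where ab: "cs_eq t a" "ctx root_jin a b" "cs_eq b t'" by (auto simp: jin_def)
  from cs_eq_typing[OF ab(1) \<open>typing \<Gamma> t \<tau> n C H\<close>] have "typing \<Gamma> a \<tau> n C H" .
  from ctx_typed_decrease[OF ab(2)] this obtain \<Gamma>' n' C' H' where h: "typing \<Gamma>' b \<tau> n' C' H'" "decreases \<Gamma> n C H \<Gamma>' n' C' H'"
    unfolding typed_decrease_def by blast
  from cs_eq_typing[OF ab(3) h(1)] have "typing \<Gamma>' t' \<tau> n' C' H'" .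
  with h(2) show ?thesis unfolding decreases_def by blast
qed

section \<open>Typable terms are strongly normalising\<close>

definition measure_order :: "(nat \<times> (nat \<times> nat) multiset) rel" where
  "measure_order = less_than <*lex*> {(M, N). M < N}"

lemma wf_measure_order: "wf measure_order"
  unfolding measure_order_def by (intro wf_lex_prod wf_less_than wf_less_multiset)

lemma typable_SN: "typing \<Gamma> t \<tau> n C H \<Longrightarrow> SN jin t"
proof -
  have "\<forall>t \<Gamma> \<tau> n C H. typing \<Gamma> t \<tau> n C H \<longrightarrow> (n, C + close n H) = r \<longrightarrow> Wellfounded.accp (\<lambda>a b. jin b a) t" for r
  proof (induction r rule: wf_induct[OF wf_measure_order])
    case (1 r)
    show ?case
    proof (intro allI impI)
      fix t \<Gamma> \<tau> n C H assume tt: "typing \<Gamma> t \<tau> n C H" and r: "(n, C + close n H) = r"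
      show "Wellfounded.accp (\<lambda>a b. jin b a) t"
      proof (rule accp.accI)
        fix y assume "jin t y"
        from jin_decreases[OF this tt] obtain \<Gamma>' n' C' H' where h: "typing \<Gamma>' y \<tau> n' C' H'"
          "n' < n \<or> (n' = n \<and> C' + close n H' < C + close n H)" by blast
        then have "((n', C' + close n' H'), r) \<in> measure_order" using r by (auto simp: measure_order_def)
        with 1 h(1) show "Wellfounded.accp (\<lambda>a b. jin b a) y" by blast
      qed
    qed
  qed
  then show "typing \<Gamma> t \<tau> n C H \<Longrightarrow> SN jin t" by (auto simp: SN_def)
qed

section \<open>Beta-strongly normalising lambda-terms are typable\<close>

definition apps :: "trm \<Rightarrow> trm list \<Rightarrow> trm" where "apps a ds = foldl App a ds"
lemma apps_simps[simp]: "apps a [] = a" "apps a (d # ds) = apps (App a d) ds" "apps a (ds @ [d]) = App (apps a ds) d"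
  by (auto simp: apps_def)

fun neutral :: "trm \<Rightarrow> bool" where
  "neutral (Var i) = True"
| "neutral (App t u) = neutral t"
| "neutral _ = False"

lemma is_lambda_lift: "is_lambda t \<Longrightarrow> is_lambda (lift k t)"
  by (induction t arbitrary: k) auto
lemma is_lambda_subst: "is_lambda t \<Longrightarrow> is_lambda u \<Longrightarrow> is_lambda (subst t k u)"
  by (induction t arbitrary: k u) (auto simp: is_lambda_lift)
lemma is_lambda_beta: "beta t t' \<Longrightarrow> is_lambda t \<Longrightarrow> is_lambda t'"
  by (induction rule: beta.induct) (auto simp: is_lambda_subst)

lemma beta_apps: "beta x y \<Longrightarrow> beta (apps x ds) (apps y ds)"
  by (induction ds arbitrary: x y) (auto intro: beta.appl)

lemma head_form: "is_lambda a \<Longrightarrow> (\<exists>i ds. a = apps (Var i) ds) \<or> (\<exists>s ds. a = apps (Lam s) ds)"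
proof (induction a)
  case (Var i) then show ?case by (metis apps_simps(1))
next
  case (Lam s) then show ?case by (metis apps_simps(1))
next
  case (App a1 a2)
  then show ?case by (metis apps_simps(3) is_lambda.simps(3))
next
  case (Sub a1 a2) then show ?case by simp
qed

inductive subt :: "trm \<Rightarrow> trm \<Rightarrow> bool" where
  srefl: "subt t t"
| slam: "subt s t \<Longrightarrow> subt s (Lam t)"
| sappl: "subt s t \<Longrightarrow> subt s (App t u)"
| sappr: "subt s u \<Longrightarrow> subt s (App t u)"

lemma subt_size: "subt s t \<Longrightarrow> size s \<le> size t"
  by (induction rule: subt.induct) auto

lemma subt_proper: "subt s t \<Longrightarrow> s \<noteq> t \<Longrightarrow> size s < size t"
  by (induction rule: subt.induct) (auto dest: subt_size)

lemma subt_trans: "subt t r \<Longrightarrow> subt s t \<Longrightarrow> subt s r"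
  by (induction rule: subt.induct) (auto intro: subt.intros)

lemma subt_beta: "subt s t \<Longrightarrow> beta s y \<Longrightarrow> \<exists>t'. beta t t' \<and> subt y t'"
proof (induction rule: subt.induct)
  case (srefl t) then show ?case by (auto intro: subt.intros)
next
  case (slam s t) then show ?case by (auto intro: subt.intros beta.intros)
next
  case (sappl s t u) then show ?case by (auto intro: subt.intros beta.intros)
next
  case (sappr s u t) then show ?case by (auto intro: subt.intros beta.intros)
qed

definition sn_order :: "trm \<Rightarrow> trm \<Rightarrow> bool" where
  "sn_order y x \<longleftrightarrow> beta x y \<or> (subt y x \<and> y \<noteq> x)"

(* Beta-SN terms are accessible for sn_order: a beta-step from a subterm lifts to a
   beta-step of the whole term, and subterms decrease in size. *)
lemma SN_beta_sn_order: "SN beta t \<Longrightarrow> Wellfounded.accp sn_order t"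
proof -
  assume "SN beta t"
  then have "Wellfounded.accp (\<lambda>a b. beta b a) t" by (simp add: SN_def)
  then have "\<forall>s. subt s t \<longrightarrow> Wellfounded.accp sn_order s"
  proof (induction rule: accp.induct)
    case (accI t)
    have "subt s t \<longrightarrow> Wellfounded.accp sn_order s" for s
    proof (induction "size s" arbitrary: s rule: less_induct)
      case less
      show ?case
      proof
        assume st: "subt s t"
        show "Wellfounded.accp sn_order s"
        proof (rule accp.accI)
          fix y assume "sn_order y s"
          then have "beta s y \<or> (subt y s \<and> y \<noteq> s)" by (simp add: sn_order_def)
          then show "Wellfounded.accp sn_order y"
          proof
            assume "beta s y"
            from subt_beta[OF st this] obtain t' where "beta t t'" "subt y t'" by blast
            with accI.IH show ?thesis by blast
          next
            assume "subt y s \<and> y \<noteq> s"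
            then have "size y < size s" "subt y t"
              using subt_proper subt_trans st by auto
            with less show ?thesis by blast
          qed
        qed
      qed
    qed
    then show ?case by blast
  qed
  then show ?thesis by (blast intro: subt.srefl)
qed

lemma unsubst_args:
  assumes "\<forall>a\<in>#TA. \<exists>a0 Ta. tty a0 = tty a \<and> tenv a = rem k (tenv a0) \<oplus> judgs_env Ta \<and> image_mset tty Ta = tenv a0 k \<and>
      (\<forall>j\<in>#Ta. Q j) \<and> P a0"
  shows "\<exists>TA0 T2. image_mset tty TA0 = image_mset tty TA \<and> judgs_env TA = rem k (judgs_env TA0) \<oplus> judgs_env T2 \<and>
     image_mset tty T2 = judgs_env TA0 k \<and> (\<forall>j\<in>#T2. Q j) \<and> (\<forall>a0\<in>#TA0. P a0)"
  using assms
proof (induction TA)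
  case empty
  then show ?case by (intro exI[where x="{#}"]) auto
next
  case (add a TA)
  then obtain TA0 T2 where h: "image_mset tty TA0 = image_mset tty TA" "judgs_env TA = rem k (judgs_env TA0) \<oplus> judgs_env T2"
     "image_mset tty T2 = judgs_env TA0 k" "\<forall>j\<in>#T2. Q j" "\<forall>a0\<in>#TA0. P a0" by auto
  from add.prems obtain a0 Ta where g: "tty a0 = tty a" "tenv a = rem k (tenv a0) \<oplus> judgs_env Ta" "image_mset tty Ta = tenv a0 k"
      "\<forall>j\<in>#Ta. Q j" "P a0" by auto
  have "image_mset tty (add_mset a0 TA0) = image_mset tty (add_mset a TA) \<and> judgs_env (add_mset a TA) = rem k (judgs_env (add_mset a0 TA0)) \<oplus> judgs_env (Ta + T2) \<and>
     image_mset tty (Ta + T2) = judgs_env (add_mset a0 TA0) k \<and> (\<forall>j\<in>#Ta + T2. Q j) \<and> (\<forall>b\<in>#add_mset a0 TA0. P b)"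
    using h g by (auto simp: eadd_ac) (simp add: eadd_def)
  then show ?case by blast
qed

lemma typing_unsubst: "is_lambda t \<Longrightarrow> typing \<Gamma> (subst t k u) \<tau> n C H \<Longrightarrow>
  \<exists>\<Gamma>0 T n0 C0 H0. typing \<Gamma>0 t \<tau> n0 C0 H0 \<and> image_mset tty T = \<Gamma>0 k \<and>
     (\<forall>j\<in>#T. derives j u) \<and> \<Gamma> = rem k \<Gamma>0 \<oplus> judgs_env T"
proof (induction t arbitrary: \<Gamma> \<tau> n C H k u)
  case (Var i)
  show ?case
  proof (cases "i = k")
    case True
    with Var have tu: "typing \<Gamma> u \<tau> n C H" by simp
    have "typing (single k \<tau>) (Var i) \<tau> (Suc 0) {#} {#}" using True typing.tvar by simp
    moreover have "image_mset tty {#Judg \<Gamma> \<tau> n C H#} = single k \<tau> k" by (simp add: single_def)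
    moreover have "\<Gamma> = rem k (single k \<tau>) \<oplus> judgs_env {#Judg \<Gamma> \<tau> n C H#}" by (simp add: rem_single_same)
    moreover have "\<forall>j\<in>#{#Judg \<Gamma> \<tau> n C H#}. derives j u" using tu by simp
    ultimately show ?thesis by blast
  next
    case False
    with Var have "typing \<Gamma> (Var (if i < k then i else i - 1)) \<tau> n C H" by (simp split: if_splits)
    then have e: "\<Gamma> = single (if i < k then i else i - 1) \<tau>" "n = Suc 0" "C = {#}" "H = {#}" by (auto elim!: typing_VarE)
    have "typing (single i \<tau>) (Var i) \<tau> (Suc 0) {#} {#}" by (rule typing.tvar)
    moreover have "image_mset tty {#} = single i \<tau> k" using False by (simp add: single_def)
    moreover have "\<Gamma> = rem k (single i \<tau>) \<oplus> judgs_env {#}" using e False by (simp add: rem_single)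
    moreover have "\<forall>j\<in>#{#}. derives j u" by simp
    ultimately show ?thesis by blast
  qed
next
  case (Lam t)
  from Lam.prems(2) obtain \<Gamma>1 \<tau>' W n1 C1 H1 where e: "\<Gamma> = rem 0 \<Gamma>1" "\<tau> = Arr (\<Gamma>1 0 + W) \<tau>'"
     and tt: "typing \<Gamma>1 (subst t (Suc k) (lift 0 u)) \<tau>' n1 C1 H1"
    by (auto elim!: typing_LamE)
  from Lam.IH[OF _ tt] Lam.prems(1) obtain \<Gamma>0 T n0 C0 H0 where h: "typing \<Gamma>0 t \<tau>' n0 C0 H0" "image_mset tty T = \<Gamma>0 (Suc k)"
    "\<forall>j\<in>#T. derives j (lift 0 u)" "\<Gamma>1 = rem (Suc k) \<Gamma>0 \<oplus> judgs_env T" by auto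
  have h3: "\<forall>j\<in>#T. tenv j 0 = {#} \<and> typing (rem 0 (tenv j)) u (tty j) (tsz j) (tC j) (tO j)"
    using h(3) typing_unlift by blast
  then have z: "judgs_env T 0 = {#}" by (intro judgs_env_zero_at) auto
  let ?T = "image_mset (mapenv (rem 0)) T"
  have g: "\<Gamma>1 0 = \<Gamma>0 0" using h(4) z by (simp add: eadd_def rem_def)
  from typing.tlam[OF h(1), of W] have "typing (rem 0 \<Gamma>0) (Lam t) \<tau> (Suc n0) (C0 + close n0 H0) {#}" using e g by simp
  moreover have "image_mset tty ?T = rem 0 \<Gamma>0 k" using h(2) by (simp add: multiset.map_comp comp_def rem_def)
  moreover have "\<forall>j\<in>#?T. derives j u" using h3 by auto
  moreover have "\<Gamma> = rem k (rem 0 \<Gamma>0) \<oplus> judgs_env ?T" using e h(4) by (simp add: mapenv_props rem_rem_Suc)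
  ultimately show ?case by blast
next
  case (App t1 t2)
  from App.prems(2) obtain \<Gamma>1 M n1 C1 H1 TA where e: "\<Gamma> = \<Gamma>1 \<oplus> judgs_env TA"
    and tt: "typing \<Gamma>1 (subst t1 k u) (Arr M \<tau>) n1 C1 H1"
    and ok: "args_for M TA" and tu: "\<forall>j\<in>#TA. derives j (subst t2 k u)"
    by (auto elim!: typing_AppE)
  from App.IH(1)[OF _ tt] App.prems(1) obtain \<Gamma>01 T1 n0 C0 H0 where h: "typing \<Gamma>01 t1 (Arr M \<tau>) n0 C0 H0" "image_mset tty T1 = \<Gamma>01 k"
    "\<forall>j\<in>#T1. derives j u" "\<Gamma>1 = rem k \<Gamma>01 \<oplus> judgs_env T1" by auto
  have "\<forall>a\<in>#TA. \<exists>a0 Ta. tty a0 = tty a \<and> tenv a = rem k (tenv a0) \<oplus> judgs_env Ta \<and> image_mset tty Ta = tenv a0 k \<and>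
      (\<forall>j\<in>#Ta. derives j u) \<and> derives a0 t2"
  proof
    fix a assume "a \<in># TA"
    with tu have "derives a (subst t2 k u)" by blast
    from App.IH(2)[OF _ this] App.prems(1) obtain \<Gamma>0 T n0 C0 H0 where g: "typing \<Gamma>0 t2 (tty a) n0 C0 H0" "image_mset tty T = \<Gamma>0 k"
      "\<forall>j\<in>#T. derives j u" "tenv a = rem k \<Gamma>0 \<oplus> judgs_env T" by auto
    then show "\<exists>a0 Ta. tty a0 = tty a \<and> tenv a = rem k (tenv a0) \<oplus> judgs_env Ta \<and> image_mset tty Ta = tenv a0 k \<and>
      (\<forall>j\<in>#Ta. derives j u) \<and> derives a0 t2"
      by (intro exI[where x="Judg \<Gamma>0 (tty a) n0 C0 H0"] exI[where x=T]) auto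
  qed
  from unsubst_args[OF this] obtain TA0 T2 where c: "image_mset tty TA0 = image_mset tty TA" "judgs_env TA = rem k (judgs_env TA0) \<oplus> judgs_env T2"
     "image_mset tty T2 = judgs_env TA0 k" "\<forall>j\<in>#T2. derives j u"
     "\<forall>a0\<in>#TA0. derives a0 t2" by blast
  have ok': "args_for M TA0" using ok args_for_same_image[OF c(1)] by simp
  from typing.tapp[OF h(1) ok' c(5)] have "typing (\<Gamma>01 \<oplus> judgs_env TA0) (App t1 t2) \<tau> (Suc (n0 + judgs_size TA0)) (C0 + close n0 H0 + judgs_measure TA0) {#}" .
  moreover have "image_mset tty (T1 + T2) = (\<Gamma>01 \<oplus> judgs_env TA0) k" using h(2) c(3) by (simp add: eadd_def)
  moreover have "\<forall>j\<in>#T1 + T2. derives j u" using h(3) c(4) by auto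
  moreover have "\<Gamma> = rem k (\<Gamma>01 \<oplus> judgs_env TA0) \<oplus> judgs_env (T1 + T2)" using e h(4) c(2) by (simp add: eadd_ac)
  ultimately show ?case by blast
next
  case (Sub t1 t2)
  then show ?case by simp
qed

(* Subject expansion for a head redex: if the contractum and the argument are typable,
   then so is the redex (the argument provides a witness when it is erased). *)
lemma expand_redex: "is_lambda s \<Longrightarrow> typing \<Gamma> (subst s 0 c) \<tau> n C H \<Longrightarrow> typing \<Delta> c \<sigma> m Cc Hc \<Longrightarrow>
  \<exists>\<Gamma>' n' C' H'. typing \<Gamma>' (App (Lam s) c) \<tau> n' C' H'"
proof -
  assume sl: "is_lambda s" and ts: "typing \<Gamma> (subst s 0 c) \<tau> n C H" and tc: "typing \<Delta> c \<sigma> m Cc Hc"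
  from typing_unsubst[OF sl ts] obtain \<Gamma>0 T n0 C0 H0 where h: "typing \<Gamma>0 s \<tau> n0 C0 H0" "image_mset tty T = \<Gamma>0 0"
     "\<forall>j\<in>#T. derives j c" by blast
  from typing.tlam[OF h(1), of "{#}"] have tl: "typing (rem 0 \<Gamma>0) (Lam s) (Arr (\<Gamma>0 0) \<tau>) (Suc n0) (C0 + close n0 H0) {#}" by simp
  show ?thesis
  proof (cases "\<Gamma>0 0 = {#}")
    case True
    let ?T = "{#Judg \<Delta> \<sigma> m Cc Hc#}"
    have "args_for (\<Gamma>0 0) ?T" using True by (simp add: args_for_def)
    moreover have "\<forall>j\<in>#?T. derives j c" using tc by simp
    ultimately show ?thesis using typing.tapp[OF tl] by blast
  next
    case False
    then have "args_for (\<Gamma>0 0) T" using h(2) by (simp add: args_for_def)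
    then show ?thesis using typing.tapp[OF tl _ h(3)] by blast
  qed
qed

lemma expand_apps: "is_lambda s \<Longrightarrow> typing \<Gamma> (apps (subst s 0 c) ds) \<tau> n C H \<Longrightarrow> typing \<Delta> c \<sigma> m Cc Hc \<Longrightarrow>
  \<exists>\<Gamma>' n' C' H'. typing \<Gamma>' (apps (App (Lam s) c) ds) \<tau> n' C' H'"
proof (induction ds arbitrary: \<Gamma> \<tau> n C H rule: rev_induct)
  case Nil
  then show ?case using expand_redex by simp
next
  case (snoc d ds)
  from snoc.prems(2) obtain \<Gamma>1 M n1 C1 H1 T where tt: "typing \<Gamma>1 (apps (subst s 0 c) ds) (Arr M \<tau>) n1 C1 H1"
    and ok: "args_for M T" and tu: "\<forall>j\<in>#T. derives j d"
    by (auto elim!: typing_AppE)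
  from snoc.IH[OF snoc.prems(1) tt snoc.prems(3)] obtain \<Gamma>' n' C' H' where
    "typing \<Gamma>' (apps (App (Lam s) c) ds) (Arr M \<tau>) n' C' H'" by blast
  from typing.tapp[OF this ok tu] show ?case by auto
qed

lemma neutral_apps_Var: "neutral (apps (Var i) ds)"
  by (induction ds rule: rev_induct) auto

lemma subt_apps: "subt x h \<Longrightarrow> subt x (apps h ds)"
  by (induction ds arbitrary: h) (auto intro: subt.intros)

lemma is_lambda_apps: "is_lambda (apps h ds) \<longleftrightarrow> is_lambda h \<and> (\<forall>d\<in>set ds. is_lambda d)"
  by (induction ds rule: rev_induct) auto

lemma head_redex:
  assumes "is_lambda a" and "\<not> neutral a"
  shows "\<exists>s c ds. App a b = apps (App (Lam s) c) ds"
proof -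
  from head_form[OF assms(1)] assms(2) neutral_apps_Var obtain s ds where ad: "a = apps (Lam s) ds" by blast
  obtain c ds' where cd: "ds @ [b] = c # ds'" by (cases "ds @ [b]") auto
  have "App a b = apps (App (Lam s) c) ds'" using ad cd by (metis apps_simps(2,3))
  then show ?thesis by blast
qed

lemma head_redex_sn_order:
  assumes te: "t = apps (App (Lam s) c) ds"
  shows "beta t (apps (subst s 0 c) ds)" and "sn_order c t"
proof -
  show "beta t (apps (subst s 0 c) ds)" using te by (auto intro: beta_apps beta.root)
  have sct: "subt c t" using te by (auto intro!: subt_apps intro: subt.intros)
  have "subt (App (Lam s) c) t" using te by (auto intro!: subt_apps intro: subt.intros)
  then have "size c < size t" using subt_size by fastforce
  then show "sn_order c t" using sct by (auto simp: sn_order_def)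
qed

lemma typable: "Wellfounded.accp sn_order t \<Longrightarrow> is_lambda t \<Longrightarrow>
   (\<exists>\<Gamma> \<tau> n C H. typing \<Gamma> t \<tau> n C H) \<and> (neutral t \<longrightarrow> (\<forall>\<tau>. \<exists>\<Gamma> n C H. typing \<Gamma> t \<tau> n C H))"
proof (induction rule: accp.induct)
  case (accI t)
  show ?case
  proof (cases t)
    case (Var i)
    then show ?thesis using typing.tvar by blast
  next
    case (Lam s)
    have "sn_order s t" using Lam by (auto simp: sn_order_def intro: subt.intros)
    moreover have "is_lambda s" using accI.prems Lam by simp
    ultimately obtain \<Gamma> \<tau> n C H where "typing \<Gamma> s \<tau> n C H" using accI.IH by blast
    from typing.tlam[OF this, of "{#}"] Lam have "\<exists>\<Gamma> \<tau> n C H. typing \<Gamma> t \<tau> n C H" by blast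
    then show ?thesis using Lam by simp
  next
    case (App a b)
    have Ra: "sn_order a t" using App by (auto simp: sn_order_def intro: subt.intros)
    have Rb: "sn_order b t" using App by (auto simp: sn_order_def intro: subt.intros)
    have la: "is_lambda a" and lb: "is_lambda b" using accI.prems App by auto
    from accI.IH[OF Rb lb] obtain \<Delta> \<sigma> m Cb Hb where tb: "typing \<Delta> b \<sigma> m Cb Hb" by blast
    show ?thesis
    proof (cases "neutral a")
      case True
      have "\<forall>\<tau>. \<exists>\<Gamma> n C H. typing \<Gamma> t \<tau> n C H"
      proof
        fix \<tau>
        from accI.IH[OF Ra la] True obtain \<Gamma> n C H where ta: "typing \<Gamma> a (Arr {#\<sigma>#} \<tau>) n C H" by blast
        let ?T = "{#Judg \<Delta> \<sigma> m Cb Hb#}"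
        have "args_for {#\<sigma>#} ?T" by (simp add: args_for_def)
        moreover have "\<forall>j\<in>#?T. derives j b" using tb by simp
        ultimately show "\<exists>\<Gamma> n C H. typing \<Gamma> t \<tau> n C H" using typing.tapp[OF ta] App by blast
      qed
      then show ?thesis by blast
    next
      case False
      from head_redex[OF la False] App obtain s c ds where te: "t = apps (App (Lam s) c) ds" by blast
      let ?r = "apps (subst s 0 c) ds"
      from head_redex_sn_order[OF te] have br: "beta t ?r" and Rc: "sn_order c t" by auto
      from br have Rr: "sn_order ?r t" by (simp add: sn_order_def)
      have lr: "is_lambda ?r" using is_lambda_beta[OF br accI.prems] .
      from accI.IH[OF Rr lr] obtain \<Gamma> \<tau> n C H where tr: "typing \<Gamma> ?r \<tau> n C H" by blast
      have lt: "is_lambda t" using accI.prems .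
      then have ls: "is_lambda s" and lc: "is_lambda c" using te by (auto simp: is_lambda_apps)
      from accI.IH[OF Rc lc] obtain \<Delta>' \<sigma>' m' Cc Hc where tc: "typing \<Delta>' c \<sigma>' m' Cc Hc" by blast
      from expand_apps[OF ls tr tc] te have "\<exists>\<Gamma>' n' C' H'. typing \<Gamma>' t \<tau> n' C' H'" by simp
      moreover have "\<not> neutral t" using App False by simp
      ultimately show ?thesis by blast
    qed
  next
    case (Sub t1 t2)
    then show ?thesis using accI.prems by simp
  qed
qed

theorem corollary52:
  assumes "is_lambda t" and "SN beta t"
  shows "SN jin t"
proof -
  have "Wellfounded.accp sn_order t" using assms(2) by (rule SN_beta_sn_order)
  then obtain \<Gamma> \<tau> n C H where "typing \<Gamma> t \<tau> n C H" using typable assms(1) by blast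
  then show ?thesis by (rule typable_SN)
qed

end
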